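(* Let $\mathcal{F}$ be an indecomposable coherent sheaf on $\mathbb{P}^1$. Then $\mathcal{F}$ is described by a defining triple $(\mathcal{F}',\mathcal{F}'',\varphi)$ of one of the following forms, where $\mathcal{F}'=\widetilde{M'}$, $\mathcal{F}''=\widetilde{M''}$ are indecomposable coherent sheaves (or $0$) on $U_1$, $U_2$ respectively and $\varphi:\mathcal{F}'|_{U_1\cap U_2}\cong\mathcal{F}''|_{U_1\cap U_2}$: (1) $(\mathcal{F}',0,0)$ with $\Gamma_{M'}$ of type 1; (2) $(0,\mathcal{F}'',0)$ with $\Gamma_{M''}$ of type 1; (3) $(\mathcal{F}',\mathcal{F}'',\varphi)$ with $\Gamma_{M'}$, $\Gamma_{M''}$ of type 2, and after choosing isomorphisms $\mathcal{F}'|_{U_1\cap U_2}\cong\mathcal{L}$ and $\mathcal{F}''|_{U_1\cap U_2}\cong\mathcal{L}$, $\varphi$ is identified with $\phi_n$ for some $n\in\mathbb{Z}$; (4) $(\mathcal{F}',\mathcal{F}'',\psi)$ with $\Gamma_{M'}$, $\Gamma_{M''}$ of type 3, and after choosing isomorphisms $\mathcal{F}'|_{U_1\cap U_2}\cong\mathcal{C}_k$ and $\mathcal{F}''|_{U_1\cap U_2}\cong\mathcal{C}_k$, $\psi$ is identified with $\psi_m$ for some $m\in\mathbb{Z}/k\mathbb{Z}$. Moreover, $\mathcal{F}$ is torsion in cases (1) and (2), and torsion-free in cases (3) and (4).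
   Context: Monoids are commutative with $1$ and absorbing $0$; a module is a pointed set $(M,* )$ with action satisfying $1m=m$, $a(bm)=(ab)m$, $0m=*$. $\mathbb P^1$ is the monoid scheme obtained by gluing $U_1=\operatorname{MSpec}(\langle t\rangle)$ and $U_2=\operatorname{MSpec}(\langle t^{-1}\rangle)$ along $U_1\cap U_2=\operatorname{MSpec}(\langle t,t^{-1}\rangle)$, where $\langle t\rangle=\{0,1,t,t^2,\dots\}$, $\langle t^{-1}\rangle=\{0,1,t^{-1},t^{-2},\dots\}$, $\langle t,t^{-1}\rangle=\{0\}\cup\{t^n:n\in\mathbb Z\}$. A coherent sheaf on $\mathbb P^1$ is equivalently a defining triple $(\mathcal F',\mathcal F'',\varphi)$ of coherent sheaves $\mathcal F'=\widetilde{M'}$ on $U_1$, $\mathcal F''=\widetilde{M''}$ on $U_2$ ($M',M''$ finitely generated modules; restriction to $U_1\cap U_2$ is localization at $t$, resp. $t^{-1}$) and a gluing isomorphism $\varphi$ over $U_1\cap U_2$. A coherent sheaf is indecomposable if non-zero and not a direct sum (sectionwise wedge sum) of two non-zero coherent sheaves. For a module $M$ over $\langle s\rangle$ ($s=t$ or $t^{-1}$), $\Gamma_M$ is the directed graph on $M\setminus\{*\}$ with edges $m\to sm$ whenever $sm\ne*$. Type 1: a rooted tree (underlying undirected graph a tree with a unique vertex without outgoing edge, reached from every vertex by a directed path). Type 2: a finite rooted tree whose root is joined to the initial vertex of an infinite directed ray $v_0\to v_1\to\cdots$. Type 3: an oriented directed cycle with rooted trees attached. $\mathcal L=\widetilde{\langle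 t,t^{-1}\rangle}$ on $U_1\cap U_2$, with automorphisms $\phi_n$ induced by multiplication by $t^n$, $n\in\mathbb Z$. $\mathcal C_k=\widetilde{C_k}$ with $C_k=\{*,1,t,\dots,t^{k-1}\}$ and $t$ acting by the cyclic permutation $1\mapsto t\mapsto\cdots\mapsto t^{k-1}\mapsto1$; its automorphisms $\psi_m$ are induced by multiplication by $t^m$ and depend only on $m\bmod k$. An element $m$ of a module is torsion if some nonzero element of the monoid sends it to $*$; a module is torsion if all elements are torsion and torsion-free if only $*$ is; a quasicoherent sheaf is torsion (resp. torsion-free) if its sections over every open affine form a torsion (resp. torsion-free) module. *)

theory Defs
  imports Main
begin

text \<open>A module over the monoid \<langle>s\<rangle> = {0,1,s,s^2,...} is a pointed set (M, pt)
  with an action; it is determined by the action of the generator s, a self-map f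
  of M fixing pt (the action of s^n is f^^n, the action of 0 is the constant pt).\<close>

definition is_mod :: "'a set \<Rightarrow> 'a \<Rightarrow> ('a \<Rightarrow> 'a) \<Rightarrow> bool" where
  "is_mod M pt f \<longleftrightarrow> pt \<in> M \<and> (\<forall>m\<in>M. f m \<in> M) \<and> f pt = pt"

definition fin_gen :: "'a set \<Rightarrow> 'a \<Rightarrow> ('a \<Rightarrow> 'a) \<Rightarrow> bool" where
  "fin_gen M pt f \<longleftrightarrow> (\<exists>G. finite G \<and> G \<subseteq> M \<and>
      M = insert pt {(f ^^ n) g | g n. g \<in> G})"

definition mod_split :: "'a set \<Rightarrow> 'a \<Rightarrow> ('a \<Rightarrow> 'a) \<Rightarrow> 'a set \<Rightarrow> 'a set \<Rightarrow> bool" where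
  "mod_split M pt f A B \<longleftrightarrow> is_mod A pt f \<and> is_mod B pt f \<and> A \<union> B = M \<and> A \<inter> B = {pt}"

definition mod_indecomp :: "'a set \<Rightarrow> 'a \<Rightarrow> ('a \<Rightarrow> 'a) \<Rightarrow> bool" where
  "mod_indecomp M pt f \<longleftrightarrow> M \<noteq> {pt} \<and>
     \<not> (\<exists>A B. mod_split M pt f A B \<and> A \<noteq> {pt} \<and> B \<noteq> {pt})"

text \<open>Torsion: nonzero monoid elements are s^n, acting by f^^n.\<close>
definition mod_torsion :: "'a set \<Rightarrow> 'a \<Rightarrow> ('a \<Rightarrow> 'a) \<Rightarrow> bool" where
  "mod_torsion M pt f \<longleftrightarrow> (\<forall>m\<in>M. \<exists>n. (f ^^ n) m = pt)"

definition mod_torsion_free :: "'a set \<Rightarrow> 'a \<Rightarrow> ('a \<Rightarrow> 'a) \<Rightarrow> bool" where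
  "mod_torsion_free M pt f \<longleftrightarrow> (\<forall>m\<in>M. (\<exists>n. (f ^^ n) m = pt) \<longrightarrow> m = pt)"

text \<open>The element (m,i) represents s^-i m.  Its class in the localization M_s.\<close>
definition cls :: "'a set \<Rightarrow> ('a \<Rightarrow> 'a) \<Rightarrow> 'a \<times> nat \<Rightarrow> ('a \<times> nat) set" where
  "cls M f p = {(m', j). m' \<in> M \<and> (\<exists>k. (f ^^ (k + j)) (fst p) = (f ^^ (k + snd p)) m')}"

definition loc :: "'a set \<Rightarrow> ('a \<Rightarrow> 'a) \<Rightarrow> ('a \<times> nat) set set" where
  "loc M f = {cls M f (m, i) | m i. m \<in> M}"

definition loc_pt :: "'a set \<Rightarrow> ('a \<Rightarrow> 'a) \<Rightarrow> 'a \<Rightarrow> ('a \<times> nat) set" where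
  "loc_pt M f pt = cls M f (pt, 0)"

definition loc_fwd :: "'a set \<Rightarrow> ('a \<Rightarrow> 'a) \<Rightarrow> ('a \<times> nat) set \<Rightarrow> ('a \<times> nat) set" where
  "loc_fwd M f x = (let p = (SOME p. p \<in> x) in cls M f (f (fst p), snd p))"

definition loc_bwd :: "'a set \<Rightarrow> ('a \<Rightarrow> 'a) \<Rightarrow> ('a \<times> nat) set \<Rightarrow> ('a \<times> nat) set" where
  "loc_bwd M f x = (let p = (SOME p. p \<in> x) in cls M f (fst p, Suc (snd p)))"

text \<open>Such a module is a pointed set N with the actions sig of t and tau of t^-1.
  Isomorphism: bijection preserving the base point and commuting with t.\<close>
definition lmod_iso :: "'b set \<Rightarrow> 'b \<Rightarrow> ('b \<Rightarrow> 'b) \<Rightarrow> 'c set \<Rightarrow> 'c \<Rightarrow> ('c \<Rightarrow> 'c)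
    \<Rightarrow> ('b \<Rightarrow> 'c) \<Rightarrow> bool" where
  "lmod_iso N1 p1 s1 N2 p2 s2 h \<longleftrightarrow> bij_betw h N1 N2 \<and> h p1 = p2 \<and>
     (\<forall>x\<in>N1. h (s1 x) = s2 (h x))"

text \<open>Nonzero monoid elements are t^n (n \<in> Z), acting by sig^^n or tau^^(-n).\<close>
definition lmod_torsion :: "'b set \<Rightarrow> 'b \<Rightarrow> ('b \<Rightarrow> 'b) \<Rightarrow> ('b \<Rightarrow> 'b) \<Rightarrow> bool" where
  "lmod_torsion N pt sig tau \<longleftrightarrow> (\<forall>x\<in>N. \<exists>n. (sig ^^ n) x = pt \<or> (tau ^^ n) x = pt)"

definition lmod_torsion_free :: "'b set \<Rightarrow> 'b \<Rightarrow> ('b \<Rightarrow> 'b) \<Rightarrow> ('b \<Rightarrow> 'b) \<Rightarrow> bool" where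
  "lmod_torsion_free N pt sig tau \<longleftrightarrow>
     (\<forall>x\<in>N. (\<exists>n. (sig ^^ n) x = pt \<or> (tau ^^ n) x = pt) \<longrightarrow> x = pt)"

text \<open>The module \<langle>t,t^-1\<rangle> (None = 0, Some n = t^n) underlying L, and phi_n.\<close>
definition L_car :: "int option set" where "L_car = UNIV"
definition L_t :: "int option \<Rightarrow> int option" where "L_t = map_option (\<lambda>j. j + 1)"
definition phiL :: "int \<Rightarrow> int option \<Rightarrow> int option" where "phiL n = map_option (\<lambda>j. j + n)"

text \<open>C_k = {*,1,t,...,t^(k-1)} (None = *, Some j = t^j), cyclic t-action, and psi_m.\<close>
definition C_car :: "nat \<Rightarrow> int option set" where
  "C_car k = insert None (Some ` {0..<int k})"
definition C_t :: "nat \<Rightarrow> int option \<Rightarrow> int option" where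
  "C_t k = map_option (\<lambda>j. (j + 1) mod int k)"
definition psiC :: "nat \<Rightarrow> int \<Rightarrow> int option \<Rightarrow> int option" where
  "psiC k m = map_option (\<lambda>j. (j + m) mod int k)"

text \<open>Vertices M - {pt}; edge v \<rightarrow> f v when f v \<noteq> pt.  For a vertex subset S we
  consider the induced subgraph, whose edges are indexed by their source v \<in> S with
  f v \<in> S.  Underlying undirected (multi)graph: edge v joins v and f v.\<close>

definition uadj :: "('a \<Rightarrow> 'a) \<Rightarrow> 'a set \<Rightarrow> 'a \<Rightarrow> 'a \<Rightarrow> bool" where
  "uadj f S a b \<longleftrightarrow> a \<in> S \<and> b \<in> S \<and> (f a = b \<or> f b = a)"

definition uconnected :: "('a \<Rightarrow> 'a) \<Rightarrow> 'a set \<Rightarrow> bool" where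
  "uconnected f S \<longleftrightarrow> (\<forall>u\<in>S. \<forall>w\<in>S. \<exists>xs. xs \<noteq> [] \<and> hd xs = u \<and> last xs = w \<and>
      set xs \<subseteq> S \<and> (\<forall>i. Suc i < length xs \<longrightarrow> uadj f S (xs ! i) (xs ! Suc i)))"

definition uacyclic :: "('a \<Rightarrow> 'a) \<Rightarrow> 'a set \<Rightarrow> bool" where
  "uacyclic f S \<longleftrightarrow> \<not> (\<exists>es xs. es \<noteq> [] \<and> distinct es \<and> set es \<subseteq> {v \<in> S. f v \<in> S} \<and>
      length xs = Suc (length es) \<and> hd xs = last xs \<and> distinct (butlast xs) \<and>
      (\<forall>i<length es. {es ! i, f (es ! i)} = {xs ! i, xs ! Suc i}))"

definition utree :: "('a \<Rightarrow> 'a) \<Rightarrow> 'a set \<Rightarrow> bool" where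
  "utree f S \<longleftrightarrow> uconnected f S \<and> uacyclic f S"

definition rooted_tree :: "('a \<Rightarrow> 'a) \<Rightarrow> 'a set \<Rightarrow> 'a \<Rightarrow> bool" where
  "rooted_tree f S r \<longleftrightarrow> r \<in> S \<and> f r \<notin> S \<and> (\<forall>v\<in>S. f v \<notin> S \<longrightarrow> v = r) \<and>
     (\<forall>v\<in>S. \<exists>n. (f ^^ n) v = r \<and> (\<forall>i\<le>n. (f ^^ i) v \<in> S)) \<and> utree f S"

definition graph_type1 :: "'a set \<Rightarrow> 'a \<Rightarrow> ('a \<Rightarrow> 'a) \<Rightarrow> bool" where
  "graph_type1 M pt f \<longleftrightarrow> (\<exists>r. rooted_tree f (M - {pt}) r)"

definition graph_type2 :: "'a set \<Rightarrow> 'a \<Rightarrow> ('a \<Rightarrow> 'a) \<Rightarrow> bool" where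
  "graph_type2 M pt f \<longleftrightarrow> (\<exists>T r (v :: nat \<Rightarrow> 'a). finite T \<and> rooted_tree f T r \<and> inj v \<and>
     range v \<inter> T = {} \<and> M - {pt} = T \<union> range v \<and> f r = v 0 \<and>
     (\<forall>i. f (v i) = v (Suc i)))"

definition graph_type3 :: "'a set \<Rightarrow> 'a \<Rightarrow> ('a \<Rightarrow> 'a) \<Rightarrow> bool" where
  "graph_type3 M pt f \<longleftrightarrow> (\<exists>c (k::nat) P.
     let C = (\<lambda>i. (f ^^ i) c) ` {..<k} in
     k \<ge> 1 \<and> (f ^^ k) c = c \<and> inj_on (\<lambda>i. (f ^^ i) c) {..<k} \<and> C \<subseteq> M - {pt} \<and>
     (\<forall>T\<in>P. \<exists>r. rooted_tree f T r \<and> f r \<in> C) \<and> pairwise disjnt P \<and> {} \<notin> P \<and>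
     \<Union>P = (M - {pt}) - C)"

text \<open>(M1,p1,f1): module over \<langle>t\<rangle> (f1 = action of t), sections on U1;
  (M2,p2,f2): module over \<langle>t^-1\<rangle> (f2 = action of t^-1), sections on U2;
  phi: gluing isomorphism of \<langle>t,t^-1\<rangle>-modules between the localizations, where
  t acts on loc M1 by loc_fwd M1 f1 and on loc M2 by loc_bwd M2 f2.\<close>

definition coherent_triple :: "'a set \<Rightarrow> 'a \<Rightarrow> ('a \<Rightarrow> 'a) \<Rightarrow> 'a set \<Rightarrow> 'a \<Rightarrow> ('a \<Rightarrow> 'a)
    \<Rightarrow> (('a \<times> nat) set \<Rightarrow> ('a \<times> nat) set) \<Rightarrow> bool" where
  "coherent_triple M1 p1 f1 M2 p2 f2 phi \<longleftrightarrow>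
     is_mod M1 p1 f1 \<and> fin_gen M1 p1 f1 \<and> is_mod M2 p2 f2 \<and> fin_gen M2 p2 f2 \<and>
     lmod_iso (loc M1 f1) (loc_pt M1 f1 p1) (loc_fwd M1 f1)
              (loc M2 f2) (loc_pt M2 f2 p2) (loc_bwd M2 f2) phi"

text \<open>Direct sum decomposition into two nonzero coherent subsheaves: wedge splittings of
  both modules compatible with the gluing.\<close>
definition triple_decomposable :: "'a set \<Rightarrow> 'a \<Rightarrow> ('a \<Rightarrow> 'a) \<Rightarrow> 'a set \<Rightarrow> 'a \<Rightarrow> ('a \<Rightarrow> 'a)
    \<Rightarrow> (('a \<times> nat) set \<Rightarrow> ('a \<times> nat) set) \<Rightarrow> bool" where
  "triple_decomposable M1 p1 f1 M2 p2 f2 phi \<longleftrightarrow> (\<exists>A1 B1 A2 B2.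
     mod_split M1 p1 f1 A1 B1 \<and> mod_split M2 p2 f2 A2 B2 \<and>
     (\<forall>a\<in>A1. \<forall>i. phi (cls M1 f1 (a, i)) \<in> {cls M2 f2 (b, j) | b j. b \<in> A2}) \<and>
     (\<forall>a\<in>B1. \<forall>i. phi (cls M1 f1 (a, i)) \<in> {cls M2 f2 (b, j) | b j. b \<in> B2}) \<and>
     (A1 \<noteq> {p1} \<or> A2 \<noteq> {p2}) \<and> (B1 \<noteq> {p1} \<or> B2 \<noteq> {p2}))"

definition triple_indecomp :: "'a set \<Rightarrow> 'a \<Rightarrow> ('a \<Rightarrow> 'a) \<Rightarrow> 'a set \<Rightarrow> 'a \<Rightarrow> ('a \<Rightarrow> 'a)
    \<Rightarrow> (('a \<times> nat) set \<Rightarrow> ('a \<times> nat) set) \<Rightarrow> bool" where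
  "triple_indecomp M1 p1 f1 M2 p2 f2 phi \<longleftrightarrow> (M1 \<noteq> {p1} \<or> M2 \<noteq> {p2}) \<and>
     \<not> triple_decomposable M1 p1 f1 M2 p2 f2 phi"

text \<open>Open affines of P^1: (empty,) U1, U2, U1 \<inter> U2; sections M1, M2, and the
  localizations.\<close>
definition triple_torsion :: "'a set \<Rightarrow> 'a \<Rightarrow> ('a \<Rightarrow> 'a) \<Rightarrow> 'a set \<Rightarrow> 'a \<Rightarrow> ('a \<Rightarrow> 'a) \<Rightarrow> bool" where
  "triple_torsion M1 p1 f1 M2 p2 f2 \<longleftrightarrow> mod_torsion M1 p1 f1 \<and> mod_torsion M2 p2 f2 \<and>
     lmod_torsion (loc M1 f1) (loc_pt M1 f1 p1) (loc_fwd M1 f1) (loc_bwd M1 f1) \<and>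
     lmod_torsion (loc M2 f2) (loc_pt M2 f2 p2) (loc_bwd M2 f2) (loc_fwd M2 f2)"

definition triple_torsion_free :: "'a set \<Rightarrow> 'a \<Rightarrow> ('a \<Rightarrow> 'a) \<Rightarrow> 'a set \<Rightarrow> 'a \<Rightarrow> ('a \<Rightarrow> 'a) \<Rightarrow> bool" where
  "triple_torsion_free M1 p1 f1 M2 p2 f2 \<longleftrightarrow> mod_torsion_free M1 p1 f1 \<and> mod_torsion_free M2 p2 f2 \<and>
     lmod_torsion_free (loc M1 f1) (loc_pt M1 f1 p1) (loc_fwd M1 f1) (loc_bwd M1 f1) \<and>
     lmod_torsion_free (loc M2 f2) (loc_pt M2 f2 p2) (loc_bwd M2 f2) (loc_fwd M2 f2)"

end

theory Submission
  imports Defs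
begin

text \<open>
  A module over \<open>\<langle>s\<rangle>\<close> is the wedge sum of its torsion part and its torsion-free part, and
  the gluing respects this splitting because torsion dies in the localization; so an
  indecomposable sheaf is either torsion or torsion-free on both charts.

  In the torsion case both localizations are trivial and the gluing imposes no condition:
  one chart carries nothing and the other an indecomposable torsion module. There the
  elements, grouped by the last nonzero element of their forward orbit, form submodules,
  so there is a single such group, i.e. a rooted tree.

  In the torsion-free case a module is recovered from its localization, so a splitting of
  one chart transports along the gluing to a compatible splitting of the other, and both
  modules are indecomposable. In an indecomposable module any two forward orbits meet.
  If some element is periodic, its cycle \<open>C\<close> absorbs everything and the rest splits into
  trees hanging off \<open>C\<close>; the localization is \<open>C\<^sub>k\<close>. Otherwise all orbits eventually run
  into one injective orbit, finite generation leaves only finitely many elements off a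
  tail of it, and the localization is \<open>L\<close>. The two localizations are isomorphic, hence of
  the same kind (finite or not, of the same size), and the gluing becomes an automorphism
  of \<open>L\<close> or \<open>C\<^sub>k\<close>, i.e. a translation \<open>\<phi>\<^sub>n\<close> or a rotation \<open>\<psi>\<^sub>m\<close>.
\<close>

section \<open>Localization\<close>

lemma mod_funpow_closed: "is_mod M pt f \<Longrightarrow> m \<in> M \<Longrightarrow> (f ^^ n) m \<in> M"
  by (induction n) (auto simp: is_mod_def)

lemma mod_funpow_pt: "is_mod M pt f \<Longrightarrow> (f ^^ n) pt = pt"
  by (induction n) (auto simp: is_mod_def)

lemma funpow_apply_add: "(f ^^ m) ((f ^^ n) x) = (f ^^ (m + n)) x"
  by (simp add: funpow_add)

definition loc_equiv :: "('a \<Rightarrow> 'a) \<Rightarrow> 'a \<times> nat \<Rightarrow> 'a \<times> nat \<Rightarrow> bool" where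
  "loc_equiv f p q \<longleftrightarrow> (\<exists>k. (f ^^ (k + snd q)) (fst p) = (f ^^ (k + snd p)) (fst q))"

lemma loc_equiv_refl: "loc_equiv f p p"
  by (auto simp: loc_equiv_def)

lemma loc_equiv_sym: "loc_equiv f p q \<Longrightarrow> loc_equiv f q p"
  unfolding loc_equiv_def by metis

lemma loc_equiv_trans:
  assumes "loc_equiv f (m, i) (m', j)" and "loc_equiv f (m', j) (m'', h)"
  shows "loc_equiv f (m, i) (m'', h)"
proof -
  obtain k where k: "(f ^^ (k + j)) m = (f ^^ (k + i)) m'"
    using assms(1) by (auto simp: loc_equiv_def)
  obtain l where l: "(f ^^ (l + h)) m' = (f ^^ (l + j)) m''"
    using assms(2) by (auto simp: loc_equiv_def)
  have "(f ^^ ((k + l + j) + h)) m = (f ^^ (l + h)) ((f ^^ (k + j)) m)"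
    by (simp add: funpow_apply_add algebra_simps)
  also have "\<dots> = (f ^^ (k + i)) ((f ^^ (l + h)) m')"
    using k by (simp add: funpow_apply_add algebra_simps)
  also have "\<dots> = (f ^^ ((k + l + j) + i)) m''"
    using l by (simp add: funpow_apply_add algebra_simps)
  finally show ?thesis by (auto simp: loc_equiv_def)
qed

lemma loc_equiv_map:
  assumes "loc_equiv f (m, i) (m', j)"
  shows "loc_equiv f (f m, i) (f m', j)" and "loc_equiv f (m, Suc i) (m', Suc j)"
proof -
  obtain k where k: "(f ^^ (k + j)) m = (f ^^ (k + i)) m'"
    using assms by (auto simp: loc_equiv_def)
  then have "f ((f ^^ (k + j)) m) = f ((f ^^ (k + i)) m')"
    by simp
  then have "(f ^^ (k + j)) (f m) = (f ^^ (k + i)) (f m')"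
    and "(f ^^ (k + Suc j)) m = (f ^^ (k + Suc i)) m'"
    by (simp_all only: funpow_swap1 add_Suc_right funpow.simps(2) comp_apply)
  then show "loc_equiv f (f m, i) (f m', j)" and "loc_equiv f (m, Suc i) (m', Suc j)"
    unfolding loc_equiv_def by auto
qed

lemma mem_cls: "q \<in> cls M f p \<longleftrightarrow> fst q \<in> M \<and> loc_equiv f p q"
  by (cases q) (auto simp: cls_def loc_equiv_def)

lemma cls_eq_iff:
  assumes "m \<in> M" and "m' \<in> M"
  shows "cls M f (m, i) = cls M f (m', j) \<longleftrightarrow> loc_equiv f (m, i) (m', j)"
proof
  assume "cls M f (m, i) = cls M f (m', j)"
  moreover have "(m', j) \<in> cls M f (m', j)"
    using assms(2) by (simp add: mem_cls loc_equiv_refl)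
  ultimately show "loc_equiv f (m, i) (m', j)"
    by (metis mem_cls prod.sel(1,2))
next
  assume "loc_equiv f (m, i) (m', j)"
  then have "loc_equiv f (m, i) (n, h) \<longleftrightarrow> loc_equiv f (m', j) (n, h)" for n h
    using loc_equiv_trans[of f m i m' j] loc_equiv_trans[of f m' j m i] loc_equiv_sym
    by metis
  then show "cls M f (m, i) = cls M f (m', j)"
    unfolding set_eq_iff mem_cls split_paired_All by simp
qed

lemma cls_shift:
  assumes "is_mod M pt f" and "m \<in> M"
  shows "cls M f (m, i) = cls M f ((f ^^ a) m, i + a)"
proof -
  have "loc_equiv f (m, i) ((f ^^ a) m, i + a)"
    unfolding loc_equiv_def by (rule exI[of _ 0]) (simp add: funpow_apply_add add.commute)
  then show ?thesis
    using cls_eq_iff assms mod_funpow_closed by metis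
qed

lemma cls_eq_loc_pt_iff:
  assumes "is_mod M pt f" and "m \<in> M"
  shows "cls M f (m, i) = loc_pt M f pt \<longleftrightarrow> (\<exists>n. (f ^^ n) m = pt)"
proof -
  have "pt \<in> M"
    using assms(1) by (simp add: is_mod_def)
  then have "cls M f (m, i) = loc_pt M f pt \<longleftrightarrow> loc_equiv f (m, i) (pt, 0)"
    unfolding loc_pt_def using cls_eq_iff[OF assms(2)] by simp
  also have "\<dots> \<longleftrightarrow> (\<exists>n. (f ^^ n) m = pt)"
    unfolding loc_equiv_def using mod_funpow_pt[OF assms(1)] by (auto simp: funpow_add)
  finally show ?thesis .
qed

lemma cls_in_loc: "m \<in> M \<Longrightarrow> cls M f (m, i) \<in> loc M f"
  by (auto simp: loc_def)

lemma loc_pt_in_loc: "is_mod M pt f \<Longrightarrow> loc_pt M f pt \<in> loc M f"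
  by (auto simp: loc_pt_def loc_def is_mod_def)

lemma loc_cases:
  assumes "x \<in> loc M f"
  obtains m i where "x = cls M f (m, i)" and "m \<in> M"
  using assms by (auto simp: loc_def)

lemma some_in_cls:
  assumes "m \<in> M"
  obtains m' j where "(SOME p. p \<in> cls M f (m, i)) = (m', j)" and "m' \<in> M"
    and "loc_equiv f (m, i) (m', j)"
proof -
  have "(m, i) \<in> cls M f (m, i)"
    using assms by (simp add: mem_cls loc_equiv_refl)
  then have "(SOME p. p \<in> cls M f (m, i)) \<in> cls M f (m, i)"
    by (rule someI)
  moreover obtain m' j where "(SOME p. p \<in> cls M f (m, i)) = (m', j)"
    by (rule prod.exhaust)
  ultimately show ?thesis
    using that by (simp add: mem_cls)
qed

lemma loc_fwd_cls:
  assumes "is_mod M pt f" and "m \<in> M"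
  shows "loc_fwd M f (cls M f (m, i)) = cls M f (f m, i)"
proof -
  obtain m' j where S: "(SOME p. p \<in> cls M f (m, i)) = (m', j)" "m' \<in> M"
    "loc_equiv f (m, i) (m', j)"
    using some_in_cls[OF assms(2)] .
  have "f m' \<in> M" and "f m \<in> M"
    using assms S(2) by (auto simp: is_mod_def)
  then have "cls M f (f m', j) = cls M f (f m, i)"
    by (rule cls_eq_iff[THEN iffD2]) (rule loc_equiv_map(1)[OF loc_equiv_sym[OF S(3)]])
  then show ?thesis
    unfolding loc_fwd_def Let_def S(1) by simp
qed

lemma loc_bwd_cls:
  assumes "m \<in> M"
  shows "loc_bwd M f (cls M f (m, i)) = cls M f (m, Suc i)"
proof -
  obtain m' j where S: "(SOME p. p \<in> cls M f (m, i)) = (m', j)" "m' \<in> M"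
    "loc_equiv f (m, i) (m', j)"
    using some_in_cls[OF assms] .
  have "cls M f (m', Suc j) = cls M f (m, Suc i)"
    by (rule cls_eq_iff[OF S(2) assms, THEN iffD2])
      (rule loc_equiv_map(2)[OF loc_equiv_sym[OF S(3)]])
  then show ?thesis
    unfolding loc_bwd_def Let_def S(1) by simp
qed

lemma loc_fwd_funpow_cls:
  assumes "is_mod M pt f" and "m \<in> M"
  shows "(loc_fwd M f ^^ n) (cls M f (m, i)) = cls M f ((f ^^ n) m, i)"
  by (induction n) (simp_all add: loc_fwd_cls[OF assms(1)] mod_funpow_closed[OF assms])

lemma loc_bwd_funpow_cls:
  assumes "m \<in> M"
  shows "(loc_bwd M f ^^ n) (cls M f (m, i)) = cls M f (m, i + n)"
  by (induction n) (simp_all add: loc_bwd_cls[OF assms])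

lemma loc_fwd_in_loc:
  assumes "is_mod M pt f" and "x \<in> loc M f"
  shows "loc_fwd M f x \<in> loc M f"
proof -
  obtain m i where x: "x = cls M f (m, i)" and m: "m \<in> M"
    using assms(2) by (rule loc_cases)
  have "f m \<in> M"
    using assms(1) m by (simp add: is_mod_def)
  then show ?thesis
    unfolding x loc_fwd_cls[OF assms(1) m] by (rule cls_in_loc)
qed

lemma loc_bwd_in_loc:
  assumes "x \<in> loc M f"
  shows "loc_bwd M f x \<in> loc M f"
proof -
  obtain m i where x: "x = cls M f (m, i)" and m: "m \<in> M"
    using assms by (rule loc_cases)
  show ?thesis
    unfolding x loc_bwd_cls[OF m] using m by (rule cls_in_loc)
qed

lemma loc_fwd_bwd:
  assumes "is_mod M pt f" and "x \<in> loc M f"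
  shows "loc_fwd M f (loc_bwd M f x) = x" and "loc_bwd M f (loc_fwd M f x) = x"
proof -
  obtain m i where x: "x = cls M f (m, i)" and m: "m \<in> M"
    using assms(2) by (rule loc_cases)
  have fm: "f m \<in> M"
    using assms(1) m by (simp add: is_mod_def)
  have shift: "cls M f (f m, Suc i) = x"
    using cls_shift[OF assms(1) m, of i 1] x by simp
  show "loc_fwd M f (loc_bwd M f x) = x"
    unfolding x loc_bwd_cls[OF m] loc_fwd_cls[OF assms(1) m] using shift x by simp
  show "loc_bwd M f (loc_fwd M f x) = x"
    unfolding x loc_fwd_cls[OF assms(1) m] loc_bwd_cls[OF fm] using shift x by simp
qed

lemma loc_fwd_loc_pt:
  assumes "is_mod M pt f"
  shows "loc_fwd M f (loc_pt M f pt) = loc_pt M f pt"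
  using assms loc_fwd_cls[OF assms, of pt 0] by (simp add: loc_pt_def is_mod_def)

lemma loc_bwd_loc_pt:
  assumes "is_mod M pt f"
  shows "loc_bwd M f (loc_pt M f pt) = loc_pt M f pt"
  using loc_fwd_bwd(2)[OF assms loc_pt_in_loc[OF assms]] loc_fwd_loc_pt[OF assms] by simp

section \<open>Rooted trees\<close>

lemma uadj_walk:
  assumes "(uadj f S)\<^sup>*\<^sup>* u w" and "u \<in> S"
  shows "\<exists>xs. xs \<noteq> [] \<and> hd xs = u \<and> last xs = w \<and> set xs \<subseteq> S \<and>
           (\<forall>i. Suc i < length xs \<longrightarrow> uadj f S (xs ! i) (xs ! Suc i))"
  using assms(1)
proof (induction rule: rtranclp_induct)
  case base
  show ?case
    using assms(2) by (intro exI[of _ "[u]"]) simp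
next
  case (step y z)
  then obtain xs where xs: "xs \<noteq> []" "hd xs = u" "last xs = y" "set xs \<subseteq> S"
    "\<forall>i. Suc i < length xs \<longrightarrow> uadj f S (xs ! i) (xs ! Suc i)"
    by blast
  have "uadj f S ((xs @ [z]) ! i) ((xs @ [z]) ! Suc i)" if "Suc i < length (xs @ [z])" for i
  proof (cases "Suc i < length xs")
    case True
    then show ?thesis
      using xs(5) by (simp add: nth_append)
  next
    case False
    then have "i = length xs - 1"
      using that by simp
    then show ?thesis
      using step(2) xs(1,3) by (simp add: nth_append last_conv_nth)
  qed
  moreover have "z \<in> S"
    using step(2) by (simp add: uadj_def)
  ultimately show ?case
    using xs by (intro exI[of _ "xs @ [z]"]) simp
qed

lemma uconnectedI_root:
  assumes "r \<in> S" and "\<And>v. v \<in> S \<Longrightarrow> (uadj f S)\<^sup>*\<^sup>* v r"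
  shows "uconnected f S"
proof -
  have "symp (uadj f S)"
    by (auto simp: symp_def uadj_def)
  then have from_root: "(uadj f S)\<^sup>*\<^sup>* r w" if "w \<in> S" for w
    using assms(2)[OF that] by (rule sympD[OF symp_rtranclp])
  show ?thesis
    unfolding uconnected_def
  proof (intro ballI)
    fix u w assume "u \<in> S" and "w \<in> S"
    have "(uadj f S)\<^sup>*\<^sup>* u w"
      using assms(2)[OF \<open>u \<in> S\<close>] from_root[OF \<open>w \<in> S\<close>] by (rule rtranclp_trans)
    then show "\<exists>xs. xs \<noteq> [] \<and> hd xs = u \<and> last xs = w \<and> set xs \<subseteq> S \<and>
        (\<forall>i. Suc i < length xs \<longrightarrow> uadj f S (xs ! i) (xs ! Suc i))"
      using \<open>u \<in> S\<close> by (rule uadj_walk)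
  qed
qed

lemma uadj_funpow:
  assumes "\<forall>i\<le>n. (f ^^ i) v \<in> S"
  shows "(uadj f S)\<^sup>*\<^sup>* v ((f ^^ n) v)"
  using assms
proof (induction n)
  case 0
  show ?case by simp
next
  case (Suc n)
  have "(f ^^ n) v \<in> S" and "(f ^^ Suc n) v \<in> S"
    using Suc.prems[rule_format, of n] Suc.prems[rule_format, of "Suc n"] by simp_all
  then have "uadj f S ((f ^^ n) v) ((f ^^ Suc n) v)"
    by (simp add: uadj_def)
  with Suc show ?case
    by (simp add: rtranclp.rtrancl_into_rtrancl)
qed

lemma ex_greatest_below:
  fixes g :: "nat \<Rightarrow> 'a::linorder"
  assumes "0 < n"
  shows "\<exists>i0<n. \<forall>i<n. g i \<le> g i0"
proof -
  have "Max (g ` {..<n}) \<in> g ` {..<n}"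
    using assms by (intro Max_in) auto
  then obtain i0 where "i0 < n" and "Max (g ` {..<n}) = g i0"
    by auto
  moreover have "g i \<le> Max (g ` {..<n})" if "i < n" for i
    using that by (intro Max_ge) auto
  ultimately show ?thesis
    by auto
qed

text \<open>A closed trail would have to leave its highest vertex along both of its edges, but an
  edge always leads to a strictly lower vertex.\<close>

lemma uacyclic_if_height:
  assumes height: "\<And>v. v \<in> S \<Longrightarrow> f v \<in> S \<Longrightarrow> d v = Suc (d (f v))"
  shows "uacyclic f S"
  unfolding uacyclic_def
proof
  assume "\<exists>es xs. es \<noteq> [] \<and> distinct es \<and> set es \<subseteq> {v \<in> S. f v \<in> S} \<and>
    length xs = Suc (length es) \<and> hd xs = last xs \<and> distinct (butlast xs) \<and>
    (\<forall>i<length es. {es ! i, f (es ! i)} = {xs ! i, xs ! Suc i})"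
  then obtain es xs where es: "es \<noteq> []" "distinct es" "set es \<subseteq> {v \<in> S. f v \<in> S}"
    and xs: "length xs = Suc (length es)" "hd xs = last xs"
    and edge: "\<And>i. i < length es \<Longrightarrow> {es ! i, f (es ! i)} = {xs ! i, xs ! Suc i}"
    by blast
  define n where "n = length es"
  have n: "0 < n"
    using es(1) by (simp add: n_def)
  have "xs \<noteq> []"
    using xs(1) by auto
  then have wrap: "xs ! n = xs ! 0"
    using xs by (simp add: n_def hd_conv_nth last_conv_nth)
  have step: "d (es ! i) = Suc (d (f (es ! i)))" if "i < n" for i
  proof -
    have "es ! i \<in> set es"
      using that by (simp add: n_def)
    then show ?thesis
      using height es(3) by auto
  qed
  obtain i0 where i0: "i0 < n" and top: "\<And>i. i < n \<Longrightarrow> d (xs ! i) \<le> d (xs ! i0)"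
    using ex_greatest_below[OF n, of "\<lambda>i. d (xs ! i)"] by blast
  have top_Suc: "d (xs ! Suc i) \<le> d (xs ! i0)" if "i < n" for i
  proof (cases "Suc i < n")
    case False
    then have "Suc i = n"
      using that by simp
    then show ?thesis
      using top[of 0] wrap n by simp
  qed (rule top)
  have out: "es ! i = xs ! i0" if "i < n" and "xs ! i0 \<in> {xs ! i, xs ! Suc i}" for i
  proof (rule ccontr)
    assume "es ! i \<noteq> xs ! i0"
    then have "f (es ! i) = xs ! i0"
      using edge[of i] that by (auto simp: n_def doubleton_eq_iff)
    moreover have "es ! i \<in> {xs ! i, xs ! Suc i}"
      using edge[of i] that(1) by (auto simp: n_def)
    ultimately show False
      using step[OF that(1)] top[OF that(1)] top_Suc[OF that(1)] by auto
  qed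
  define j where "j = (if i0 = 0 then n - 1 else i0 - 1)"
  have j: "j < n" "xs ! Suc j = xs ! i0"
    using i0 n wrap by (auto simp: j_def)
  have "es ! j = es ! i0"
    using out[OF j(1)] out[OF i0] j(2) by simp
  then have "j = i0"
    using es(2) j(1) i0 nth_eq_iff_index_eq by (auto simp: n_def)
  then have "n = 1" "i0 = 0"
    using i0 by (auto simp: j_def split: if_splits)
  then have "f (es ! 0) = es ! 0"
    using edge[of 0] wrap by (auto simp: n_def doubleton_eq_iff)
  then show False
    using step[of 0] n by simp
qed

lemma rooted_treeI:
  assumes "r \<in> S" and "f r \<notin> S"
    and path: "\<And>v. v \<in> S \<Longrightarrow> \<exists>n. (f ^^ n) v = r \<and> (\<forall>i\<le>n. (f ^^ i) v \<in> S)"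
  shows "rooted_tree f S r"
proof -
  have unique: "v = r" if v: "v \<in> S" and fv: "f v \<notin> S" for v
  proof -
    obtain n where "(f ^^ n) v = r" and "\<forall>i\<le>n. (f ^^ i) v \<in> S"
      using path[OF v] by blast
    then show ?thesis
      using fv by (cases n) auto
  qed
  have conn: "uconnected f S"
  proof (rule uconnectedI_root[OF assms(1)])
    fix v assume "v \<in> S"
    then obtain n where "(f ^^ n) v = r" and "\<forall>i\<le>n. (f ^^ i) v \<in> S"
      using path by blast
    then show "(uadj f S)\<^sup>*\<^sup>* v r"
      using uadj_funpow by metis
  qed
  have leaves: "\<exists>n. (f ^^ n) v \<notin> S" if v: "v \<in> S" for v
  proof -
    obtain n where "(f ^^ n) v = r"
      using path[OF v] by blast
    then have "(f ^^ Suc n) v \<notin> S"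
      using assms(2) by simp
    then show ?thesis ..
  qed
  have acyc: "uacyclic f S"
  proof (rule uacyclic_if_height)
    fix v assume "v \<in> S" and "f v \<in> S"
    obtain n where "(f ^^ n) v \<notin> S"
      using leaves[OF \<open>v \<in> S\<close>] ..
    then show "(LEAST n. (f ^^ n) v \<notin> S) = Suc (LEAST n. (f ^^ n) (f v) \<notin> S)"
      using Least_Suc[of "\<lambda>n. (f ^^ n) v \<notin> S" n] \<open>v \<in> S\<close> by (simp add: funpow_swap1)
  qed
  show ?thesis
    unfolding rooted_tree_def utree_def using assms unique conn acyc by blast
qed

locale absorbed =
  fixes f :: "'a \<Rightarrow> 'a" and D Q :: "'a set"
  assumes closed: "\<And>x. x \<in> D \<Longrightarrow> f x \<in> D \<union> Q"
    and disjoint: "D \<inter> Q = {}"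
    and reaches: "\<And>x. x \<in> D \<Longrightarrow> \<exists>n. (f ^^ n) x \<in> Q"
begin

definition hit_time :: "'a \<Rightarrow> nat" where
  "hit_time x = (LEAST n. (f ^^ n) x \<in> Q)"

definition exit_point :: "'a \<Rightarrow> 'a" where
  "exit_point x = (f ^^ (hit_time x - 1)) x"

lemma hit_time:
  assumes "x \<in> D"
  shows "(f ^^ hit_time x) x \<in> Q" and "0 < hit_time x"
proof -
  show hit: "(f ^^ hit_time x) x \<in> Q"
    unfolding hit_time_def using reaches[OF assms] by (rule LeastI_ex)
  show "0 < hit_time x"
    using hit assms disjoint by (auto intro: gr0I)
qed

lemma funpow_before_hit:
  assumes "x \<in> D" and "i < hit_time x"
  shows "(f ^^ i) x \<in> D"
  using assms(2)
proof (induction i)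
  case 0
  show ?case using assms(1) by simp
next
  case (Suc i)
  have "(f ^^ Suc i) x \<notin> Q"
    using Suc.prems not_less_Least unfolding hit_time_def by blast
  moreover have "(f ^^ i) x \<in> D"
    using Suc by simp
  ultimately show ?case
    using closed by auto
qed

lemma hit_time_step:
  assumes "x \<in> D"
  shows "hit_time x = Suc (hit_time (f x))"
proof -
  have "x \<notin> Q"
    using assms disjoint by blast
  then show ?thesis
    using Least_Suc[of "\<lambda>n. (f ^^ n) x \<in> Q" "hit_time x"] hit_time(1)[OF assms]
    unfolding hit_time_def by (simp add: funpow_swap1)
qed

lemma exit_point_step:
  assumes "x \<in> D" and "f x \<in> D"
  shows "exit_point (f x) = exit_point x"
proof -
  have "hit_time x - 1 = Suc (hit_time (f x) - 1)"
    using hit_time_step[OF assms(1)] hit_time(2)[OF assms(2)] by simp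
  then show ?thesis
    unfolding exit_point_def by (simp only: funpow_Suc_right comp_apply)
qed

lemma exit_point_funpow:
  assumes "x \<in> D" and "i < hit_time x"
  shows "exit_point ((f ^^ i) x) = exit_point x"
  using assms(2)
proof (induction i)
  case 0
  show ?case by simp
next
  case (Suc i)
  have "(f ^^ i) x \<in> D" and "(f ^^ Suc i) x \<in> D"
    using funpow_before_hit[OF assms(1), of i] funpow_before_hit[OF assms(1), of "Suc i"] Suc.prems
    by simp_all
  then show ?case
    using exit_point_step Suc by simp
qed

lemma exit_point:
  assumes "x \<in> D"
  shows "exit_point x \<in> D" and "f (exit_point x) \<in> Q"
proof -
  have "hit_time x - 1 < hit_time x" and "Suc (hit_time x - 1) = hit_time x"
    using hit_time(2)[OF assms] by simp_all
  then show "exit_point x \<in> D" and "f (exit_point x) \<in> Q"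
    unfolding exit_point_def using funpow_before_hit[OF assms] hit_time(1)[OF assms]
    by (metis funpow.simps(2) comp_apply)+
qed

lemma rooted_tree_exit_class:
  assumes "x \<in> D"
  shows "rooted_tree f {y \<in> D. exit_point y = exit_point x} (exit_point x)"
proof (rule rooted_treeI)
  have "hit_time x - 1 < hit_time x"
    using hit_time(2)[OF assms] by simp
  then have "exit_point ((f ^^ (hit_time x - 1)) x) = exit_point x"
    by (rule exit_point_funpow[OF assms])
  then have "exit_point (exit_point x) = exit_point x"
    by (simp only: exit_point_def[of x, symmetric])
  then show "exit_point x \<in> {y \<in> D. exit_point y = exit_point x}"
    using exit_point(1)[OF assms] by simp
  show "f (exit_point x) \<notin> {y \<in> D. exit_point y = exit_point x}"
    using exit_point(2)[OF assms] disjoint by blast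
next
  fix v assume "v \<in> {y \<in> D. exit_point y = exit_point x}"
  then have v: "v \<in> D" "exit_point v = exit_point x"
    by simp_all
  have "(f ^^ i) v \<in> {y \<in> D. exit_point y = exit_point x}" if "i \<le> hit_time v - 1" for i
    using that hit_time(2)[OF v(1)] funpow_before_hit[OF v(1)] exit_point_funpow[OF v(1)] v(2)
    by simp
  moreover have "(f ^^ (hit_time v - 1)) v = exit_point x"
    using v(2) by (simp add: exit_point_def)
  ultimately show "\<exists>n. (f ^^ n) v = exit_point x \<and>
      (\<forall>i\<le>n. (f ^^ i) v \<in> {y \<in> D. exit_point y = exit_point x})"
    by blast
qed

end

section \<open>Splittings of modules\<close>

lemma mod_split_sym: "mod_split M pt f A B \<Longrightarrow> mod_split M pt f B A"
  by (auto simp: mod_split_def)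

lemma mod_split_trivial: "is_mod M pt f \<Longrightarrow> mod_split M pt f M {pt}"
  by (auto simp: mod_split_def is_mod_def)

lemma mod_indecompD:
  assumes "mod_indecomp M pt f" and "mod_split M pt f A B" and "A \<noteq> {pt}"
  shows "B = {pt}"
  using assms by (auto simp: mod_indecomp_def)

text \<open>Otherwise the level set of \<open>c x\<close> and its complement, each together with \<open>pt\<close>, would
  split the module.\<close>

lemma mod_indecomp_invariant_eq:
  assumes mod: "is_mod M pt f" and ind: "mod_indecomp M pt f"
    and inv: "\<And>v. v \<in> M - {pt} \<Longrightarrow> f v \<in> M - {pt} \<Longrightarrow> c (f v) = c v"
    and x: "x \<in> M - {pt}" and y: "y \<in> M - {pt}"
  shows "c y = c x"
proof (rule ccontr)
  assume "c y \<noteq> c x"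
  define A where "A = insert pt {v \<in> M - {pt}. c v = c x}"
  define B where "B = insert pt {v \<in> M - {pt}. c v \<noteq> c x}"
  have closed: "f v \<in> M - {pt} \<or> f v = pt" if "v \<in> M" for v
    using mod that by (auto simp: is_mod_def)
  have "is_mod A pt f" and "is_mod B pt f"
    using mod closed inv by (auto simp: A_def B_def is_mod_def)
  then have "mod_split M pt f A B"
    using mod by (auto simp: mod_split_def A_def B_def is_mod_def)
  moreover have "A \<noteq> {pt}"
    using x by (auto simp: A_def)
  ultimately have "B = {pt}"
    by (rule mod_indecompD[OF ind])
  then show False
    using y \<open>c y \<noteq> c x\<close> by (auto simp: B_def)
qed

lemma mod_indecomp_orbits_meet:
  assumes "is_mod M pt f" and "mod_indecomp M pt f"
    and "x \<in> M - {pt}" and "y \<in> M - {pt}"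
  shows "\<exists>a b. (f ^^ a) x = (f ^^ b) y"
proof -
  define meets where "meets v \<longleftrightarrow> (\<exists>a b. (f ^^ a) x = (f ^^ b) v)" for v
  have "meets (f v) = meets v" for v
  proof
    assume "meets (f v)"
    then obtain a b where "(f ^^ a) x = (f ^^ b) (f v)"
      unfolding meets_def by blast
    then have "(f ^^ a) x = (f ^^ Suc b) v"
      by (simp only: funpow_Suc_right comp_apply)
    then show "meets v"
      unfolding meets_def by blast
  next
    assume "meets v"
    then obtain a b where "(f ^^ a) x = (f ^^ b) v"
      unfolding meets_def by blast
    then have "f ((f ^^ a) x) = f ((f ^^ b) v)"
      by simp
    then have "(f ^^ Suc a) x = (f ^^ b) (f v)"
      by (simp only: funpow.simps(2) comp_apply funpow_swap1)
    then show "meets (f v)"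
      unfolding meets_def by blast
  qed
  then have "meets y = meets x"
    using mod_indecomp_invariant_eq[OF assms(1,2)] assms(3,4) by blast
  moreover have "meets x"
    unfolding meets_def by blast
  ultimately show ?thesis
    unfolding meets_def by blast
qed

lemma torsion_indecomp_graph_type1:
  assumes mod: "is_mod M pt f" and tor: "mod_torsion M pt f" and ind: "mod_indecomp M pt f"
  shows "graph_type1 M pt f"
proof -
  interpret absorbed f "M - {pt}" "{pt}"
  proof
    show "f x \<in> (M - {pt}) \<union> {pt}" if "x \<in> M - {pt}" for x
      using mod that by (auto simp: is_mod_def)
    show "\<exists>n. (f ^^ n) x \<in> {pt}" if "x \<in> M - {pt}" for x
      using tor that by (auto simp: mod_torsion_def)
  qed simp
  obtain v0 where v0: "v0 \<in> M - {pt}"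
    using ind mod by (auto simp: mod_indecomp_def is_mod_def)
  have "exit_point v = exit_point v0" if "v \<in> M - {pt}" for v
    using mod_indecomp_invariant_eq[OF mod ind _ v0 that] exit_point_step by blast
  then have "{y \<in> M - {pt}. exit_point y = exit_point v0} = M - {pt}"
    by blast
  then show ?thesis
    using rooted_tree_exit_class[OF v0] by (metis graph_type1_def)
qed

lemma torsion_free_step:
  assumes "is_mod M pt f" and "mod_torsion_free M pt f" and "x \<in> M - {pt}"
  shows "f x \<in> M - {pt}"
proof -
  have "(f ^^ 1) x \<noteq> pt"
    using assms(2,3) unfolding mod_torsion_free_def by blast
  then show ?thesis
    using assms(1,3) by (simp add: is_mod_def)
qed

definition torsion_part :: "'a set \<Rightarrow> 'a \<Rightarrow> ('a \<Rightarrow> 'a) \<Rightarrow> 'a set" where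
  "torsion_part M pt f = {m \<in> M. \<exists>n. (f ^^ n) m = pt}"

definition free_part :: "'a set \<Rightarrow> 'a \<Rightarrow> ('a \<Rightarrow> 'a) \<Rightarrow> 'a set" where
  "free_part M pt f = insert pt {m \<in> M. \<nexists>n. (f ^^ n) m = pt}"

lemma torsion_step_iff:
  assumes "is_mod M pt f"
  shows "(\<exists>n. (f ^^ n) (f m) = pt) \<longleftrightarrow> (\<exists>n. (f ^^ n) m = pt)"
proof
  assume "\<exists>n. (f ^^ n) (f m) = pt"
  then obtain n where "(f ^^ Suc n) m = pt"
    by (auto simp only: funpow_Suc_right comp_apply)
  then show "\<exists>n. (f ^^ n) m = pt" ..
next
  assume "\<exists>n. (f ^^ n) m = pt"
  then obtain n where "(f ^^ n) m = pt" ..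
  then have "(f ^^ n) (f m) = pt"
    using assms by (simp add: funpow_swap1[symmetric] is_mod_def)
  then show "\<exists>n. (f ^^ n) (f m) = pt" ..
qed

lemma mod_split_torsion:
  assumes mod: "is_mod M pt f"
  shows "mod_split M pt f (torsion_part M pt f) (free_part M pt f)"
proof -
  have M: "pt \<in> M" "f pt = pt" "\<And>m. m \<in> M \<Longrightarrow> f m \<in> M"
    using mod by (auto simp: is_mod_def)
  have "pt \<in> torsion_part M pt f"
    using M(1) by (auto simp: torsion_part_def intro: exI[of _ 0])
  moreover have "f m \<in> torsion_part M pt f" if "m \<in> torsion_part M pt f" for m
    using that M(3) torsion_step_iff[OF mod, of m] by (simp add: torsion_part_def)
  moreover have "f m \<in> free_part M pt f" if "m \<in> free_part M pt f" for m
    using that M(2,3) torsion_step_iff[OF mod, of m] by (auto simp: free_part_def)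
  ultimately have "is_mod (torsion_part M pt f) pt f" and "is_mod (free_part M pt f) pt f"
    using M(2) by (simp_all add: is_mod_def free_part_def)
  then show ?thesis
    using M(1) \<open>pt \<in> torsion_part M pt f\<close>
    by (auto simp: mod_split_def torsion_part_def free_part_def)
qed

lemma torsion_part_trivial_iff:
  assumes "is_mod M pt f"
  shows "torsion_part M pt f = {pt} \<longleftrightarrow> mod_torsion_free M pt f"
proof -
  have "pt \<in> torsion_part M pt f"
    using assms by (auto simp: torsion_part_def is_mod_def intro: exI[of _ 0])
  then show ?thesis
    unfolding mod_torsion_free_def torsion_part_def by blast
qed

lemma free_part_trivial_iff: "free_part M pt f = {pt} \<longleftrightarrow> mod_torsion M pt f"
proof -
  have "(f ^^ 0) pt = pt"
    by simp
  then show ?thesis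
    unfolding mod_torsion_def free_part_def by blast
qed

definition loc_sub :: "'a set \<Rightarrow> ('a \<Rightarrow> 'a) \<Rightarrow> 'a set \<Rightarrow> ('a \<times> nat) set set" where
  "loc_sub M f A = {cls M f (a, i) | a i. a \<in> A}"

lemma loc_sub_subset_loc: "A \<subseteq> M \<Longrightarrow> loc_sub M f A \<subseteq> loc M f"
  by (auto simp: loc_sub_def loc_def)

lemma loc_pt_in_loc_sub: "pt \<in> A \<Longrightarrow> loc_pt M f pt \<in> loc_sub M f A"
  by (auto simp: loc_sub_def loc_pt_def)

lemma cls_pt_eq_loc_pt:
  assumes "is_mod M pt f"
  shows "cls M f (pt, i) = loc_pt M f pt"
  using cls_eq_loc_pt_iff[OF assms, of pt i] assms by (auto simp: is_mod_def intro: exI[of _ 0])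

lemma loc_eq_loc_sub_free_part:
  assumes "is_mod M pt f"
  shows "loc M f = loc_sub M f (free_part M pt f)"
proof
  show "loc_sub M f (free_part M pt f) \<subseteq> loc M f"
    using assms by (intro loc_sub_subset_loc) (auto simp: free_part_def is_mod_def)
next
  show "loc M f \<subseteq> loc_sub M f (free_part M pt f)"
  proof
    fix x assume "x \<in> loc M f"
    then obtain m i where x: "x = cls M f (m, i)" and m: "m \<in> M"
      by (rule loc_cases)
    show "x \<in> loc_sub M f (free_part M pt f)"
    proof (cases "\<exists>n. (f ^^ n) m = pt")
      case True
      then have "x = loc_pt M f pt"
        using cls_eq_loc_pt_iff[OF assms m] x by simp
      then show ?thesis
        by (simp add: loc_pt_in_loc_sub free_part_def)
    next
      case False
      then show ?thesis
        using x m by (auto simp: loc_sub_def free_part_def)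
    qed
  qed
qed

lemma torsion_loc_trivial:
  assumes "is_mod M pt f" and "mod_torsion M pt f" and "x \<in> loc M f"
  shows "x = loc_pt M f pt"
proof -
  obtain m i where "x = cls M f (m, i)" and "m \<in> M"
    using assms(3) by (rule loc_cases)
  then show ?thesis
    using assms(2) cls_eq_loc_pt_iff[OF assms(1)] by (auto simp: mod_torsion_def)
qed

lemma torsion_free_loc_trivial:
  assumes "is_mod M pt f" and "mod_torsion_free M pt f"
    and "\<And>x. x \<in> loc M f \<Longrightarrow> x = loc_pt M f pt"
  shows "M = {pt}"
proof -
  have "m = pt" if "m \<in> M" for m
    using assms(3)[OF cls_in_loc[OF that, of f 0]] cls_eq_loc_pt_iff[OF assms(1) that]
      assms(2) that by (auto simp: mod_torsion_free_def)
  then show ?thesis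
    using assms(1) by (auto simp: is_mod_def)
qed

lemma lmod_torsion_loc:
  assumes "is_mod M pt f" and "mod_torsion M pt f"
  shows "lmod_torsion (loc M f) (loc_pt M f pt) s s'"
  unfolding lmod_torsion_def using torsion_loc_trivial[OF assms] by (metis funpow_0)

lemma lmod_torsion_free_loc:
  assumes mod: "is_mod M pt f" and tf: "mod_torsion_free M pt f"
  shows "lmod_torsion_free (loc M f) (loc_pt M f pt) (loc_fwd M f) (loc_bwd M f)"
    and "lmod_torsion_free (loc M f) (loc_pt M f pt) (loc_bwd M f) (loc_fwd M f)"
proof -
  have "x = loc_pt M f pt" if x: "x \<in> loc M f" and
    tor: "(loc_fwd M f ^^ n) x = loc_pt M f pt \<or> (loc_bwd M f ^^ n) x = loc_pt M f pt" for x n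
  proof -
    obtain m i where xm: "x = cls M f (m, i)" and m: "m \<in> M"
      using x by (rule loc_cases)
    have "cls M f ((f ^^ n) m, i) = loc_pt M f pt \<or> cls M f (m, i + n) = loc_pt M f pt"
      using tor unfolding xm loc_fwd_funpow_cls[OF mod m] loc_bwd_funpow_cls[OF m] .
    then have "\<exists>j. (f ^^ j) m = pt"
      using cls_eq_loc_pt_iff[OF mod m] cls_eq_loc_pt_iff[OF mod mod_funpow_closed[OF mod m]]
      by (auto simp: funpow_apply_add)
    then have "m = pt"
      using tf m by (auto simp: mod_torsion_free_def)
    then show ?thesis
      using xm cls_pt_eq_loc_pt[OF mod] by simp
  qed
  then show "lmod_torsion_free (loc M f) (loc_pt M f pt) (loc_fwd M f) (loc_bwd M f)"
    and "lmod_torsion_free (loc M f) (loc_pt M f pt) (loc_bwd M f) (loc_fwd M f)"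
    unfolding lmod_torsion_free_def by blast+
qed

lemma cls_mem_loc_sub_iff:
  assumes mod: "is_mod M pt f" and tf: "mod_torsion_free M pt f"
    and split: "mod_split M pt f A B" and m: "m \<in> M"
  shows "cls M f (m, i) \<in> loc_sub M f A \<longleftrightarrow> m \<in> A"
proof
  assume "cls M f (m, i) \<in> loc_sub M f A"
  then obtain a j where a: "a \<in> A" and eq: "cls M f (m, i) = cls M f (a, j)"
    by (auto simp: loc_sub_def)
  have "a \<in> M" and A: "is_mod A pt f" and B: "is_mod B pt f" and "A \<union> B = M" and "A \<inter> B = {pt}"
    using split a by (auto simp: mod_split_def)
  show "m \<in> A"
  proof (rule ccontr)
    assume "m \<notin> A"
    then have "m \<in> B"
      using m \<open>A \<union> B = M\<close> by blast
    obtain k where k: "(f ^^ (k + j)) m = (f ^^ (k + i)) a"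
      using eq cls_eq_iff[OF m \<open>a \<in> M\<close>] by (auto simp: loc_equiv_def)
    moreover have "(f ^^ (k + i)) a \<in> A" and "(f ^^ (k + j)) m \<in> B"
      using mod_funpow_closed[OF A a] mod_funpow_closed[OF B \<open>m \<in> B\<close>] by blast+
    ultimately have "(f ^^ (k + j)) m \<in> A \<inter> B"
      by simp
    then have "m = pt"
      using tf m \<open>A \<inter> B = {pt}\<close> by (auto simp: mod_torsion_free_def)
    then show False
      using \<open>m \<notin> A\<close> A by (simp add: is_mod_def)
  qed
qed (auto simp: loc_sub_def)

lemma loc_sub_split_inter:
  assumes mod: "is_mod M pt f" and tf: "mod_torsion_free M pt f"
    and split: "mod_split M pt f A B"
  shows "loc_sub M f A \<inter> loc_sub M f B = {loc_pt M f pt}"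
proof
  have "pt \<in> A" and "pt \<in> B"
    using split by (auto simp: mod_split_def is_mod_def)
  then show "{loc_pt M f pt} \<subseteq> loc_sub M f A \<inter> loc_sub M f B"
    by (simp add: loc_pt_in_loc_sub)
next
  show "loc_sub M f A \<inter> loc_sub M f B \<subseteq> {loc_pt M f pt}"
  proof
    fix x assume x: "x \<in> loc_sub M f A \<inter> loc_sub M f B"
    then obtain m i where xm: "x = cls M f (m, i)" and "m \<in> A"
      by (auto simp: loc_sub_def)
    then have m: "m \<in> M"
      using split by (auto simp: mod_split_def)
    have "m \<in> B"
      using x xm cls_mem_loc_sub_iff[OF mod tf mod_split_sym[OF split] m] by simp
    then have "m = pt"
      using \<open>m \<in> A\<close> split by (auto simp: mod_split_def)
    then show "x \<in> {loc_pt M f pt}"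
      using xm cls_pt_eq_loc_pt[OF mod] by simp
  qed
qed

section \<open>Transport of splittings along a gluing\<close>

lemma lmod_iso_inv:
  assumes h: "lmod_iso N1 p1 s1 N2 p2 s2 h" and p1: "p1 \<in> N1"
    and closed: "\<And>x. x \<in> N1 \<Longrightarrow> s1 x \<in> N1"
  shows "lmod_iso N2 p2 s2 N1 p1 s1 (inv_into N1 h)"
proof -
  have bij: "bij_betw h N1 N2" and "h p1 = p2" and comm: "\<And>x. x \<in> N1 \<Longrightarrow> h (s1 x) = s2 (h x)"
    using h by (auto simp: lmod_iso_def)
  have inv: "inv_into N1 h (h x) = x" if "x \<in> N1" for x
    using bij that by (simp add: bij_betw_imp_inj_on)
  have "inv_into N1 h (s2 y) = s1 (inv_into N1 h y)" if "y \<in> N2" for y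
  proof -
    obtain x where x: "x \<in> N1" "y = h x"
      using bij \<open>y \<in> N2\<close> by (auto simp: bij_betw_def)
    then show ?thesis
      using comm[OF x(1)] inv[OF x(1)] inv[OF closed[OF x(1)]] by simp
  qed
  then show ?thesis
    unfolding lmod_iso_def using bij_betw_inv_into[OF bij] inv[OF p1] \<open>h p1 = p2\<close> by simp
qed

lemma lmod_iso_comp:
  assumes h: "lmod_iso N1 p1 s1 N2 p2 s2 h" and g: "lmod_iso N2 p2 s2 N3 p3 s3 g"
  shows "lmod_iso N1 p1 s1 N3 p3 s3 (g \<circ> h)"
proof -
  have hb: "bij_betw h N1 N2" and gb: "bij_betw g N2 N3"
    using h g by (auto simp: lmod_iso_def)
  have "h x \<in> N2" if "x \<in> N1" for x
    using hb that by (auto simp: bij_betw_def)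
  then show ?thesis
    using bij_betw_trans[OF hb gb] h g by (auto simp: lmod_iso_def)
qed

text \<open>The element \<open>t\<close> acts on the localization of \<open>M\<close> by \<open>loc_fwd\<close> and on that of \<open>N\<close> by
  \<open>loc_bwd\<close>; an isomorphism commuting with \<open>t\<close> also commutes with \<open>t\<inverse>\<close>, which acts by the
  other operation on each side.\<close>

lemma lmod_iso_loc_bwd:
  assumes modM: "is_mod M p f" and modN: "is_mod N q g"
    and iso: "lmod_iso (loc M f) (loc_pt M f p) (loc_fwd M f) (loc N g) (loc_pt N g q) (loc_bwd N g) \<psi>"
    and x: "x \<in> loc M f"
  shows "\<psi> (loc_bwd M f x) = loc_fwd N g (\<psi> x)"
proof -
  have bij: "bij_betw \<psi> (loc M f) (loc N g)"
    and comm: "\<And>x. x \<in> loc M f \<Longrightarrow> \<psi> (loc_fwd M f x) = loc_bwd N g (\<psi> x)"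
    using iso by (auto simp: lmod_iso_def)
  have "\<psi> x = loc_bwd N g (\<psi> (loc_bwd M f x))"
    using comm[OF loc_bwd_in_loc[OF x]] loc_fwd_bwd(1)[OF modM x] by simp
  moreover have "\<psi> (loc_bwd M f x) \<in> loc N g"
    using bij loc_bwd_in_loc[OF x] by (auto simp: bij_betw_def)
  ultimately show ?thesis
    using loc_fwd_bwd(1)[OF modN] by simp
qed

lemma lmod_iso_loc_reverse:
  assumes modM: "is_mod M p f" and modN: "is_mod N q g"
    and iso: "lmod_iso (loc M f) (loc_pt M f p) (loc_fwd M f) (loc N g) (loc_pt N g q) (loc_bwd N g) \<psi>"
  shows "lmod_iso (loc N g) (loc_pt N g q) (loc_fwd N g) (loc M f) (loc_pt M f p) (loc_bwd M f)
      (inv_into (loc M f) \<psi>)"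
proof -
  have "lmod_iso (loc M f) (loc_pt M f p) (loc_bwd M f) (loc N g) (loc_pt N g q) (loc_fwd N g) \<psi>"
    using iso lmod_iso_loc_bwd[OF assms] by (simp add: lmod_iso_def)
  then show ?thesis
    using loc_pt_in_loc[OF modM] loc_bwd_in_loc by (rule lmod_iso_inv)
qed

locale tf_gluing =
  fixes M :: "'a set" and p :: 'a and f :: "'a \<Rightarrow> 'a"
    and N :: "'b set" and q :: 'b and g :: "'b \<Rightarrow> 'b"
    and \<psi> :: "('a \<times> nat) set \<Rightarrow> ('b \<times> nat) set"
  assumes modM: "is_mod M p f" and modN: "is_mod N q g"
    and tfM: "mod_torsion_free M p f" and tfN: "mod_torsion_free N q g"
    and iso: "lmod_iso (loc M f) (loc_pt M f p) (loc_fwd M f) (loc N g) (loc_pt N g q) (loc_bwd N g) \<psi>"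
begin

lemma bij: "bij_betw \<psi> (loc M f) (loc N g)"
  using iso by (simp add: lmod_iso_def)

lemma comm_bwd: "x \<in> loc M f \<Longrightarrow> loc_fwd N g (\<psi> x) = \<psi> (loc_bwd M f x)"
  using lmod_iso_loc_bwd[OF modM modN iso] by simp

definition pull :: "'a set \<Rightarrow> 'b set" where
  "pull C = {b \<in> N. cls N g (b, 0) \<in> \<psi> ` loc_sub M f C}"

lemma cls_zero_eq:
  assumes "c \<in> M" and "b \<in> N" and "\<psi> (cls M f (c, l)) = cls N g (b, j)"
  shows "cls N g (b, 0) = \<psi> (cls M f (c, l + j))"
proof -
  have "(loc_fwd N g ^^ n) (\<psi> (cls M f (c, l))) = \<psi> (cls M f (c, l + n))" for n
  proof (induction n)
    case (Suc n)
    then show ?case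
      using comm_bwd[OF cls_in_loc[OF assms(1)]] loc_bwd_cls[OF assms(1)]
      by (simp add: comm_bwd cls_in_loc[OF assms(1)])
  qed simp
  moreover have "cls N g (b, 0) = (loc_fwd N g ^^ j) (cls N g (b, j))"
    using cls_shift[OF modN assms(2), of 0 j] loc_fwd_funpow_cls[OF modN assms(2)] by simp
  ultimately show ?thesis
    using assms(3) by simp
qed

lemma pull_mem_iff:
  assumes split: "mod_split M p f C C'" and c: "c \<in> M" and b: "b \<in> N"
    and eq: "\<psi> (cls M f (c, l)) = cls N g (b, j)"
  shows "b \<in> pull C \<longleftrightarrow> c \<in> C"
proof -
  have "C \<subseteq> M"
    using split by (auto simp: mod_split_def)
  then have sub: "loc_sub M f C \<subseteq> loc M f"
    by (rule loc_sub_subset_loc)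
  have "b \<in> pull C \<longleftrightarrow> \<psi> (cls M f (c, l + j)) \<in> \<psi> ` loc_sub M f C"
    using b cls_zero_eq[OF c b eq] by (simp add: pull_def)
  also have "\<dots> \<longleftrightarrow> cls M f (c, l + j) \<in> loc_sub M f C"
    using inj_on_image_mem_iff[OF bij_betw_imp_inj_on[OF bij] cls_in_loc[OF c] sub] .
  also have "\<dots> \<longleftrightarrow> c \<in> C"
    by (rule cls_mem_loc_sub_iff[OF modM tfM split c])
  finally show ?thesis .
qed

lemma pt_in_pull:
  assumes "p \<in> C"
  shows "q \<in> pull C"
proof -
  have "cls N g (q, 0) = \<psi> (loc_pt M f p)"
    using iso by (simp add: lmod_iso_def loc_pt_def)
  then show ?thesis
    using assms modN loc_pt_in_loc_sub[OF assms] by (auto simp: pull_def is_mod_def)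
qed

lemma image_loc_sub:
  assumes split: "mod_split M p f C C'"
  shows "\<psi> ` loc_sub M f C = loc_sub N g (pull C)"
proof
  have "C \<subseteq> M"
    using split by (auto simp: mod_split_def)
  show "\<psi> ` loc_sub M f C \<subseteq> loc_sub N g (pull C)"
  proof
    fix y assume "y \<in> \<psi> ` loc_sub M f C"
    then obtain c l where c: "c \<in> C" and y: "y = \<psi> (cls M f (c, l))"
      by (auto simp: loc_sub_def)
    have "c \<in> M"
      using c \<open>C \<subseteq> M\<close> by blast
    then have "y \<in> loc N g"
      using y bij_betw_apply[OF bij cls_in_loc] by blast
    then obtain b j where "y = cls N g (b, j)" and "b \<in> N"
      by (rule loc_cases)
    then show "y \<in> loc_sub N g (pull C)"
      using pull_mem_iff[OF split \<open>c \<in> M\<close>] c y by (auto simp: loc_sub_def)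
  qed
  show "loc_sub N g (pull C) \<subseteq> \<psi> ` loc_sub M f C"
  proof
    fix y assume "y \<in> loc_sub N g (pull C)"
    then obtain b j where b: "b \<in> pull C" and y: "y = cls N g (b, j)"
      by (auto simp: loc_sub_def)
    have "b \<in> N"
      using b by (simp add: pull_def)
    then have "y \<in> \<psi> ` loc M f"
      using y bij cls_in_loc by (auto simp: bij_betw_def)
    then obtain c l where c: "c \<in> M" and yc: "y = \<psi> (cls M f (c, l))"
      by (auto simp: loc_def)
    then have "\<psi> (cls M f (c, l)) = cls N g (b, j)"
      using y by simp
    then have "c \<in> C"
      using pull_mem_iff[OF split c \<open>b \<in> N\<close>] b by blast
    then have "cls M f (c, l) \<in> loc_sub M f C"
      by (auto simp: loc_sub_def)
    then show "y \<in> \<psi> ` loc_sub M f C"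
      using yc by blast
  qed
qed

lemma is_mod_pull:
  assumes split: "mod_split M p f C C'"
  shows "is_mod (pull C) q g"
proof -
  have "p \<in> C" and "C \<subseteq> M"
    using split by (auto simp: mod_split_def is_mod_def)
  have "g b \<in> pull C" if b: "b \<in> pull C" for b
  proof -
    obtain c i where c: "c \<in> C" and eq: "cls N g (b, 0) = \<psi> (cls M f (c, i))"
      using b by (auto simp: pull_def loc_sub_def)
    have "b \<in> N" and "c \<in> M"
      using b c \<open>C \<subseteq> M\<close> by (auto simp: pull_def)
    have "cls N g (g b, 0) = loc_fwd N g (cls N g (b, 0))"
      using loc_fwd_cls[OF modN \<open>b \<in> N\<close>] by simp
    also have "\<dots> = \<psi> (cls M f (c, Suc i))"
      using eq comm_bwd[OF cls_in_loc[OF \<open>c \<in> M\<close>]] loc_bwd_cls[OF \<open>c \<in> M\<close>] by simp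
    finally show ?thesis
      using modN \<open>b \<in> N\<close> c by (auto simp: pull_def loc_sub_def is_mod_def)
  qed
  then show ?thesis
    using modN pt_in_pull[OF \<open>p \<in> C\<close>] by (simp add: is_mod_def)
qed

lemma mod_split_pull:
  assumes split: "mod_split M p f A B"
  shows "mod_split N q g (pull A) (pull B)"
proof -
  have "pull A \<union> pull B = N"
  proof
    show "N \<subseteq> pull A \<union> pull B"
    proof
      fix b assume "b \<in> N"
      then have "cls N g (b, 0) \<in> \<psi> ` loc M f"
        using bij cls_in_loc by (auto simp: bij_betw_def)
      then obtain c i where "c \<in> M" and "cls N g (b, 0) = \<psi> (cls M f (c, i))"
        by (auto simp: loc_def)
      moreover have "cls M f (c, i) \<in> loc_sub M f A \<or> cls M f (c, i) \<in> loc_sub M f B"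
        using \<open>c \<in> M\<close> split by (auto simp: mod_split_def loc_sub_def)
      ultimately show "b \<in> pull A \<union> pull B"
        using \<open>b \<in> N\<close> unfolding pull_def by blast
    qed
  qed (auto simp: pull_def)
  moreover have "pull A \<inter> pull B \<subseteq> {q}"
  proof
    fix b assume b: "b \<in> pull A \<inter> pull B"
    then have "b \<in> N" and "cls N g (b, 0) \<in> \<psi> ` loc_sub M f A \<inter> \<psi> ` loc_sub M f B"
      by (auto simp: pull_def)
    moreover have "\<psi> ` loc_sub M f A \<inter> \<psi> ` loc_sub M f B = \<psi> ` {loc_pt M f p}"
    proof -
      have "loc_sub M f A \<subseteq> loc M f" and "loc_sub M f B \<subseteq> loc M f"
        using split by (auto simp: mod_split_def intro!: loc_sub_subset_loc)
      from inj_on_image_Int[OF bij_betw_imp_inj_on[OF bij] this] show ?thesis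
        using loc_sub_split_inter[OF modM tfM split] by simp
    qed
    ultimately have "cls N g (b, 0) = loc_pt N g q"
      using iso by (simp add: lmod_iso_def)
    then show "b \<in> {q}"
      using cls_eq_loc_pt_iff[OF modN \<open>b \<in> N\<close>] tfN \<open>b \<in> N\<close>
      by (auto simp: mod_torsion_free_def)
  qed
  moreover have "q \<in> pull A" and "q \<in> pull B"
    using split pt_in_pull by (auto simp: mod_split_def is_mod_def)
  ultimately show ?thesis
    unfolding mod_split_def
    using is_mod_pull[OF split] is_mod_pull[OF mod_split_sym[OF split]] by blast
qed

end

lemma mod_split_transfer:
  assumes "tf_gluing M p f N q g \<psi>" and "mod_split M p f A B"
  obtains A' B' where "mod_split N q g A' B'"
    and "\<psi> ` loc_sub M f A = loc_sub N g A'" and "\<psi> ` loc_sub M f B = loc_sub N g B'"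
proof (rule that)
  show "mod_split N q g (tf_gluing.pull M f N g \<psi> A) (tf_gluing.pull M f N g \<psi> B)"
    by (rule tf_gluing.mod_split_pull[OF assms])
  show "\<psi> ` loc_sub M f A = loc_sub N g (tf_gluing.pull M f N g \<psi> A)"
    by (rule tf_gluing.image_loc_sub[OF assms])
  show "\<psi> ` loc_sub M f B = loc_sub N g (tf_gluing.pull M f N g \<psi> B)"
    by (rule tf_gluing.image_loc_sub[OF assms(1) mod_split_sym[OF assms(2)]])
qed

section \<open>Indecomposable triples\<close>

lemma mod_indecompI:
  assumes "M \<noteq> {pt}"
    and "\<And>A B. mod_split M pt f A B \<Longrightarrow> A \<noteq> {pt} \<Longrightarrow> B \<noteq> {pt} \<Longrightarrow> False"
  shows "mod_indecomp M pt f"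
  using assms by (auto simp: mod_indecomp_def)

lemma triple_decomposableI:
  assumes "mod_split M1 p1 f1 A1 B1" and "mod_split M2 p2 f2 A2 B2"
    and "phi ` loc_sub M1 f1 A1 \<subseteq> loc_sub M2 f2 A2"
    and "phi ` loc_sub M1 f1 B1 \<subseteq> loc_sub M2 f2 B2"
    and "A1 \<noteq> {p1} \<or> A2 \<noteq> {p2}" and "B1 \<noteq> {p1} \<or> B2 \<noteq> {p2}"
  shows "triple_decomposable M1 p1 f1 M2 p2 f2 phi"
proof -
  have "\<forall>a\<in>C1. \<forall>i. phi (cls M1 f1 (a, i)) \<in> loc_sub M2 f2 C2"
    if sub: "phi ` loc_sub M1 f1 C1 \<subseteq> loc_sub M2 f2 C2" for C1 C2
  proof (intro ballI allI)
    fix a i assume "a \<in> C1"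
    then have "cls M1 f1 (a, i) \<in> loc_sub M1 f1 C1"
      by (auto simp: loc_sub_def)
    then show "phi (cls M1 f1 (a, i)) \<in> loc_sub M2 f2 C2"
      using sub by blast
  qed
  then show ?thesis
    unfolding triple_decomposable_def loc_sub_def[symmetric]
    using assms by (intro exI[of _ A1] exI[of _ B1] exI[of _ A2] exI[of _ B2]) simp
qed

lemma torsion_loc_sub_image:
  assumes mod: "is_mod M1 p1 f1" and tor: "A \<subseteq> torsion_part M1 p1 f1"
    and pt: "phi (loc_pt M1 f1 p1) = loc_pt M2 f2 p2" and "p2 \<in> A2"
  shows "phi ` loc_sub M1 f1 A \<subseteq> loc_sub M2 f2 A2"
proof
  fix y assume "y \<in> phi ` loc_sub M1 f1 A"
  then obtain a i where a: "a \<in> A" and y: "y = phi (cls M1 f1 (a, i))"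
    by (auto simp: loc_sub_def)
  have "cls M1 f1 (a, i) = loc_pt M1 f1 p1"
    using a tor cls_eq_loc_pt_iff[OF mod] by (auto simp: torsion_part_def)
  then show "y \<in> loc_sub M2 f2 A2"
    using y pt loc_pt_in_loc_sub[OF \<open>p2 \<in> A2\<close>] by simp
qed

lemma lmod_iso_loc_trivial:
  assumes modM: "is_mod M p f" and modN: "is_mod N q g" and tfN: "mod_torsion_free N q g"
    and iso: "lmod_iso (loc M f) (loc_pt M f p) s (loc N g) (loc_pt N g q) s' \<psi>"
    and "M = {p}"
  shows "N = {q}"
proof (rule torsion_free_loc_trivial[OF modN tfN])
  fix y assume "y \<in> loc N g"
  then have "y \<in> \<psi> ` loc M f"
    using iso by (simp add: lmod_iso_def bij_betw_def)
  then obtain x where "x \<in> loc M f" and "y = \<psi> x"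
    by blast
  moreover have "mod_torsion M p f"
    using \<open>M = {p}\<close> by (auto simp: mod_torsion_def intro: exI[of _ 0])
  ultimately show "y = loc_pt N g q"
    using torsion_loc_trivial[OF modM] iso by (auto simp: lmod_iso_def)
qed

context
  fixes M1 :: "'a set" and p1 f1 M2 p2 f2 phi
  assumes coh: "coherent_triple M1 p1 f1 M2 p2 f2 phi"
begin

lemma coherent_triple_mods: "is_mod M1 p1 f1" "is_mod M2 p2 f2"
  using coh by (simp_all add: coherent_triple_def)

lemma coherent_triple_iso:
  "lmod_iso (loc M1 f1) (loc_pt M1 f1 p1) (loc_fwd M1 f1) (loc M2 f2) (loc_pt M2 f2 p2) (loc_bwd M2 f2) phi"
  using coh by (simp add: coherent_triple_def)

lemma coherent_triple_loc_pt: "phi (loc_pt M1 f1 p1) = loc_pt M2 f2 p2"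
  using coherent_triple_iso by (simp add: lmod_iso_def)

lemma coherent_triple_bij: "bij_betw phi (loc M1 f1) (loc M2 f2)"
  using coherent_triple_iso by (simp add: lmod_iso_def)

lemma triple_torsion_or_torsion_free:
  assumes "\<not> triple_decomposable M1 p1 f1 M2 p2 f2 phi"
  shows "(mod_torsion M1 p1 f1 \<and> mod_torsion M2 p2 f2) \<or>
    (mod_torsion_free M1 p1 f1 \<and> mod_torsion_free M2 p2 f2)"
proof -
  note mods = coherent_triple_mods
  have "p2 \<in> torsion_part M2 p2 f2"
    using mods(2) by (auto simp: torsion_part_def is_mod_def intro: exI[of _ 0])
  then have torsion: "phi ` loc_sub M1 f1 (torsion_part M1 p1 f1)
      \<subseteq> loc_sub M2 f2 (torsion_part M2 p2 f2)"
    by (rule torsion_loc_sub_image[where phi = phi, OF mods(1) subset_refl coherent_triple_loc_pt])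
  have "loc_sub M1 f1 (free_part M1 p1 f1) \<subseteq> loc M1 f1"
    using loc_eq_loc_sub_free_part[OF mods(1)] by simp
  then have free: "phi ` loc_sub M1 f1 (free_part M1 p1 f1) \<subseteq> loc_sub M2 f2 (free_part M2 p2 f2)"
    using coherent_triple_bij loc_eq_loc_sub_free_part[OF mods(2)] by (auto simp: bij_betw_def)
  have "(torsion_part M1 p1 f1 = {p1} \<and> torsion_part M2 p2 f2 = {p2}) \<or>
    (free_part M1 p1 f1 = {p1} \<and> free_part M2 p2 f2 = {p2})"
  proof (rule ccontr)
    assume "\<not> ?thesis"
    then have "torsion_part M1 p1 f1 \<noteq> {p1} \<or> torsion_part M2 p2 f2 \<noteq> {p2}"
      and "free_part M1 p1 f1 \<noteq> {p1} \<or> free_part M2 p2 f2 \<noteq> {p2}"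
      by auto
    from triple_decomposableI[OF mod_split_torsion[OF mods(1)] mod_split_torsion[OF mods(2)]
        torsion free this] assms show False
      by contradiction
  qed
  then show ?thesis
    unfolding torsion_part_trivial_iff[OF mods(1)] torsion_part_trivial_iff[OF mods(2)]
      free_part_trivial_iff by blast
qed

lemma torsion_triple_decomposable:
  assumes tor: "mod_torsion M1 p1 f1"
    and "mod_split M1 p1 f1 A1 B1" and "mod_split M2 p2 f2 A2 B2"
    and "A1 \<noteq> {p1} \<or> A2 \<noteq> {p2}" and "B1 \<noteq> {p1} \<or> B2 \<noteq> {p2}"
  shows "triple_decomposable M1 p1 f1 M2 p2 f2 phi"
proof -
  have "phi ` loc_sub M1 f1 C \<subseteq> loc_sub M2 f2 C'" if "C \<subseteq> M1" and "p2 \<in> C'" for C C'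
  proof (rule torsion_loc_sub_image[where phi = phi, OF coherent_triple_mods(1) _ coherent_triple_loc_pt \<open>p2 \<in> C'\<close>])
    show "C \<subseteq> torsion_part M1 p1 f1"
      using that(1) tor by (auto simp: torsion_part_def mod_torsion_def)
  qed
  moreover have "A1 \<subseteq> M1" "B1 \<subseteq> M1" "p2 \<in> A2" "p2 \<in> B2"
    using assms(2,3) by (auto simp: mod_split_def is_mod_def)
  ultimately show ?thesis
    by (intro triple_decomposableI[OF assms(2,3) _ _ assms(4,5)])
qed

text \<open>A torsion triple has trivial localizations, so the gluing imposes no condition and
  the two modules split independently.\<close>

lemma torsion_triple_indecomp_cases:
  assumes ind: "triple_indecomp M1 p1 f1 M2 p2 f2 phi" and tor: "mod_torsion M1 p1 f1"
  shows "(M2 = {p2} \<and> mod_indecomp M1 p1 f1) \<or> (M1 = {p1} \<and> mod_indecomp M2 p2 f2)"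
proof -
  note mods = coherent_triple_mods
  note no_split = torsion_triple_decomposable[OF tor] ind[unfolded triple_indecomp_def]
  have "M1 = {p1} \<or> M2 = {p2}"
    using no_split mod_split_trivial[OF mods(1)] mod_split_sym[OF mod_split_trivial[OF mods(2)]]
    by blast
  then show ?thesis
  proof
    assume M1: "M1 = {p1}"
    then have "mod_split M1 p1 f1 {p1} {p1}"
      using mod_split_trivial[OF mods(1)] by simp
    then have "mod_indecomp M2 p2 f2"
      using no_split M1 ind by (intro mod_indecompI) (auto simp: triple_indecomp_def)
    then show ?thesis
      using M1 by blast
  next
    assume M2: "M2 = {p2}"
    then have "mod_split M2 p2 f2 {p2} {p2}"
      using mod_split_trivial[OF mods(2)] by simp
    then have "mod_indecomp M1 p1 f1"
      using no_split M2 ind by (intro mod_indecompI) (auto simp: triple_indecomp_def)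
    then show ?thesis
      using M2 by blast
  qed
qed

text \<open>In the torsion-free case the localization determines the module, so a splitting of
  either side is transported along the gluing to a compatible splitting of the other.\<close>

lemma torsion_free_triple_indecomp:
  assumes ind: "triple_indecomp M1 p1 f1 M2 p2 f2 phi"
    and tf1: "mod_torsion_free M1 p1 f1" and tf2: "mod_torsion_free M2 p2 f2"
  shows "mod_indecomp M1 p1 f1" and "mod_indecomp M2 p2 f2"
proof -
  note mods = coherent_triple_mods
  define psi where "psi = inv_into (loc M1 f1) phi"
  have iso': "lmod_iso (loc M2 f2) (loc_pt M2 f2 p2) (loc_fwd M2 f2)
      (loc M1 f1) (loc_pt M1 f1 p1) (loc_bwd M1 f1) psi"
    unfolding psi_def by (rule lmod_iso_loc_reverse[OF mods coherent_triple_iso])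
  have glue: "tf_gluing M1 p1 f1 M2 p2 f2 phi"
    using mods tf1 tf2 coherent_triple_iso by unfold_locales
  have glue': "tf_gluing M2 p2 f2 M1 p1 f1 psi"
    using mods tf1 tf2 iso' by unfold_locales
  have nontrivial: "M1 \<noteq> {p1}" "M2 \<noteq> {p2}"
    using ind lmod_iso_loc_trivial[OF mods(1,2) tf2 coherent_triple_iso]
      lmod_iso_loc_trivial[OF mods(2,1) tf1 iso'] by (auto simp: triple_indecomp_def)
  have no_split: "\<not> triple_decomposable M1 p1 f1 M2 p2 f2 phi"
    using ind by (simp add: triple_indecomp_def)
  show "mod_indecomp M1 p1 f1"
  proof (rule mod_indecompI[OF nontrivial(1)])
    fix A B assume split: "mod_split M1 p1 f1 A B" and "A \<noteq> {p1}" "B \<noteq> {p1}"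
    obtain A' B' where split': "mod_split M2 p2 f2 A' B'"
      and "phi ` loc_sub M1 f1 A = loc_sub M2 f2 A'" and "phi ` loc_sub M1 f1 B = loc_sub M2 f2 B'"
      using mod_split_transfer[OF glue split] .
    then show False
      using triple_decomposableI[OF split split'] \<open>A \<noteq> {p1}\<close> \<open>B \<noteq> {p1}\<close> no_split
      by simp
  qed
  show "mod_indecomp M2 p2 f2"
  proof (rule mod_indecompI[OF nontrivial(2)])
    fix A B assume split: "mod_split M2 p2 f2 A B" and "A \<noteq> {p2}" "B \<noteq> {p2}"
    obtain A' B' where split': "mod_split M1 p1 f1 A' B'"
      and A': "psi ` loc_sub M2 f2 A = loc_sub M1 f1 A'"
      and B': "psi ` loc_sub M2 f2 B = loc_sub M1 f1 B'"
      using mod_split_transfer[OF glue' split] .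
    have cancel: "phi ` psi ` loc_sub M2 f2 C = loc_sub M2 f2 C" if "C \<subseteq> M2" for C
      unfolding psi_def using coherent_triple_bij loc_sub_subset_loc[OF that]
      by (intro image_inv_into_cancel) (auto simp: bij_betw_def)
    have "A \<subseteq> M2" and "B \<subseteq> M2"
      using split by (auto simp: mod_split_def)
    then have "phi ` loc_sub M1 f1 A' = loc_sub M2 f2 A" and "phi ` loc_sub M1 f1 B' = loc_sub M2 f2 B"
      using cancel unfolding A'[symmetric] B'[symmetric] by simp_all
    then show False
      using triple_decomposableI[OF split' split, of phi] \<open>A \<noteq> {p2}\<close> \<open>B \<noteq> {p2}\<close> no_split
      by simp
  qed
qed

end

section \<open>Orbits in torsion-free modules\<close>

lemma funpow_mod_period:
  assumes "(f ^^ k) c = c"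
  shows "(f ^^ a) c = (f ^^ (a mod k)) c"
proof -
  have periodic: "(f ^^ (q * k)) c = c" for q
    by (induction q) (simp_all add: funpow_add assms)
  have "(f ^^ a) c = (f ^^ (a mod k + a div k * k)) c"
    by simp
  also have "\<dots> = (f ^^ (a mod k)) ((f ^^ (a div k * k)) c)"
    by (simp only: funpow_add comp_apply)
  finally show ?thesis
    using periodic by simp
qed

lemma funpow_eq_iff_mod_least_period:
  assumes "0 < p" and "(f ^^ p) c = c"
  defines "k \<equiv> LEAST p. 0 < p \<and> (f ^^ p) c = c"
  shows "0 < k" and "(f ^^ a) c = (f ^^ b) c \<longleftrightarrow> a mod k = b mod k"
proof -
  have "0 < p \<and> (f ^^ p) c = c"
    using assms by simp
  then have k: "0 < k \<and> (f ^^ k) c = c"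
    unfolding k_def by (rule LeastI)
  then show "0 < k"
    by simp
  have no_repeat: False if "r < s" "s < k" "(f ^^ r) c = (f ^^ s) c" for r s
  proof -
    have "(f ^^ (k - s + r)) c = (f ^^ (k - s)) ((f ^^ r) c)"
      by (simp add: funpow_apply_add)
    also have "\<dots> = (f ^^ (k - s)) ((f ^^ s) c)"
      using that(3) by simp
    also have "\<dots> = c"
      using that(2) k by (simp add: funpow_apply_add)
    finally have "0 < k - s + r \<and> (f ^^ (k - s + r)) c = c"
      using that(1,2) by simp
    then have "k \<le> k - s + r"
      unfolding k_def by (rule Least_le)
    then show False
      using that(1,2) by simp
  qed
  have mod: "(f ^^ n) c = (f ^^ (n mod k)) c" for n
    by (rule funpow_mod_period) (use k in simp)
  show "(f ^^ a) c = (f ^^ b) c \<longleftrightarrow> a mod k = b mod k"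
  proof
    assume "(f ^^ a) c = (f ^^ b) c"
    then have eq: "(f ^^ (a mod k)) c = (f ^^ (b mod k)) c"
      unfolding mod[of a] mod[of b] .
    have "a mod k < k" and "b mod k < k"
      using k by simp_all
    then show "a mod k = b mod k"
      using no_repeat[of "a mod k" "b mod k"] no_repeat[of "b mod k" "a mod k"] eq
      by (cases "a mod k" "b mod k" rule: linorder_cases) simp_all
  next
    assume "a mod k = b mod k"
    then show "(f ^^ a) c = (f ^^ b) c"
      unfolding mod[of a] mod[of b] by (rule arg_cong)
  qed
qed

lemma funpow_eq_iff_aperiodic:
  assumes mod: "is_mod M pt f" and tf: "mod_torsion_free M pt f"
    and aperiodic: "\<And>x p. x \<in> M - {pt} \<Longrightarrow> 0 < p \<Longrightarrow> (f ^^ p) x \<noteq> x"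
    and c: "c \<in> M" "c \<noteq> pt"
  shows "(f ^^ a) c = (f ^^ b) c \<longleftrightarrow> a = b"
proof -
  have no_repeat: False if "r < s" and eq: "(f ^^ r) c = (f ^^ s) c" for r s
  proof -
    have "(f ^^ r) c \<in> M - {pt}"
      using mod_funpow_closed[OF mod c(1)] tf c by (auto simp: mod_torsion_free_def)
    moreover have "(f ^^ (s - r)) ((f ^^ r) c) = (f ^^ s) c"
      using that(1) by (simp add: funpow_apply_add)
    ultimately show False
      using aperiodic that by simp
  qed
  show ?thesis
    using no_repeat[of a b] no_repeat[of b a] by (cases a b rule: linorder_cases) auto
qed

lemma nat_mod_eq_iff_int_dvd: "(a::nat) mod k = b mod k \<longleftrightarrow> int k dvd int a - int b"
  by (metis mod_eq_dvd_iff of_nat_mod of_nat_eq_iff)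

text \<open>\<open>k = 0\<close> encodes an injective orbit (as \<open>a mod 0 = a\<close>); otherwise \<open>c\<close> lies on a cycle
  of length \<open>k\<close>.\<close>

locale tf_orbit =
  fixes M :: "'a set" and pt :: 'a and f :: "'a \<Rightarrow> 'a" and c :: 'a and k :: nat
  assumes mod: "is_mod M pt f" and tf: "mod_torsion_free M pt f"
    and c: "c \<in> M" "c \<noteq> pt"
    and orbit_eq_iff: "\<And>a b. (f ^^ a) c = (f ^^ b) c \<longleftrightarrow> a mod k = b mod k"
begin

lemma orbit_in: "(f ^^ n) c \<in> M - {pt}"
  using mod_funpow_closed[OF mod c(1)] tf c by (auto simp: mod_torsion_free_def)

text \<open>The class of \<open>t\<^sup>e c\<close>: a power of \<open>f\<close> for \<open>e \<ge> 0\<close>, a denominator otherwise.\<close>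

definition orbit_cls :: "int \<Rightarrow> ('a \<times> nat) set" where
  "orbit_cls e = cls M f ((f ^^ nat e) c, nat (- e))"

lemma cls_orbit_eq_iff:
  "cls M f ((f ^^ a) c, b) = cls M f ((f ^^ a') c, b') \<longleftrightarrow>
    int k dvd (int a + int b') - (int a' + int b)"
proof -
  have "cls M f ((f ^^ a) c, b) = cls M f ((f ^^ a') c, b') \<longleftrightarrow>
      (\<exists>n. (f ^^ (n + b' + a)) c = (f ^^ (n + b + a')) c)"
    using cls_eq_iff[OF mod_funpow_closed[OF mod c(1)] mod_funpow_closed[OF mod c(1)]]
    by (simp add: loc_equiv_def funpow_apply_add add.assoc)
  also have "\<dots> \<longleftrightarrow> int k dvd (int a + int b') - (int a' + int b)"
    by (simp add: orbit_eq_iff nat_mod_eq_iff_int_dvd algebra_simps)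
  finally show ?thesis .
qed

lemma cls_orbit: "cls M f ((f ^^ a) c, b) = orbit_cls (int a - int b)"
  unfolding orbit_cls_def cls_orbit_eq_iff by simp

lemma orbit_cls_eq_iff: "orbit_cls e = orbit_cls e' \<longleftrightarrow> int k dvd e - e'"
  unfolding orbit_cls_def cls_orbit_eq_iff by simp

lemma orbit_cls_ne_loc_pt: "orbit_cls e \<noteq> loc_pt M f pt"
proof
  assume "orbit_cls e = loc_pt M f pt"
  then obtain n where "(f ^^ n) ((f ^^ nat e) c) = pt"
    using cls_eq_loc_pt_iff[OF mod mod_funpow_closed[OF mod c(1)]] unfolding orbit_cls_def by blast
  then show False
    using orbit_in[of "n + nat e"] by (simp add: funpow_apply_add)
qed

lemma loc_fwd_orbit_cls: "loc_fwd M f (orbit_cls e) = orbit_cls (e + 1)"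
proof -
  have "loc_fwd M f (orbit_cls e) = cls M f ((f ^^ Suc (nat e)) c, nat (- e))"
    unfolding orbit_cls_def using loc_fwd_cls[OF mod mod_funpow_closed[OF mod c(1)]] by simp
  also have "\<dots> = orbit_cls (e + 1)"
    unfolding cls_orbit by (rule arg_cong[where f = orbit_cls]) simp
  finally show ?thesis .
qed

lemma loc_bwd_orbit_cls: "loc_bwd M f (orbit_cls e) = orbit_cls (e - 1)"
proof -
  have "loc_bwd M f (orbit_cls e) = cls M f ((f ^^ nat e) c, Suc (nat (- e)))"
    unfolding orbit_cls_def using loc_bwd_cls[OF mod_funpow_closed[OF mod c(1)]] by simp
  also have "\<dots> = orbit_cls (e - 1)"
    unfolding cls_orbit by (rule arg_cong[where f = orbit_cls]) simp
  finally show ?thesis .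
qed

lemma loc_eq_orbit:
  assumes ind: "mod_indecomp M pt f"
  shows "loc M f = insert (loc_pt M f pt) (range orbit_cls)"
proof
  show "loc M f \<subseteq> insert (loc_pt M f pt) (range orbit_cls)"
  proof
    fix x assume "x \<in> loc M f"
    then obtain m i where x: "x = cls M f (m, i)" and m: "m \<in> M"
      by (rule loc_cases)
    show "x \<in> insert (loc_pt M f pt) (range orbit_cls)"
    proof (cases "m = pt")
      case True
      then show ?thesis
        using x cls_pt_eq_loc_pt[OF mod] by simp
    next
      case False
      then obtain a b where ab: "(f ^^ a) m = (f ^^ b) c"
        using mod_indecomp_orbits_meet[OF mod ind] m c by blast
      have "x = cls M f ((f ^^ b) c, i + a)"
        using x cls_shift[OF mod m, of i a] ab by simp
      then show ?thesis
        unfolding cls_orbit by simp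
    qed
  qed
  show "insert (loc_pt M f pt) (range orbit_cls) \<subseteq> loc M f"
    using loc_pt_in_loc[OF mod] cls_in_loc[OF mod_funpow_closed[OF mod c(1)]]
    by (auto simp: orbit_cls_def)
qed

lemma range_orbit_cls_uminus: "range (\<lambda>e. orbit_cls (- e)) = range orbit_cls"
proof -
  have "range (\<lambda>e. orbit_cls (- e)) = orbit_cls ` range uminus"
    by (simp only: image_image)
  then show ?thesis
    by (simp only: surj_uminus)
qed

end

section \<open>The models \<open>L\<close> and \<open>C\<^sub>k\<close>\<close>

lemma lmod_iso_L_enum:
  fixes E :: "int \<Rightarrow> 'b"
  assumes inj: "inj E" and pt: "pt \<notin> range E" and N: "N = insert pt (range E)"
    and step: "\<And>e. \<sigma> (E e) = E (e + 1)" and "\<sigma> pt = pt"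
  shows "\<exists>\<alpha>. lmod_iso N pt \<sigma> L_car None L_t \<alpha>"
proof -
  define h where "h = case_option pt E"
  have "inj h"
  proof (rule injI)
    fix x y assume "h x = h y"
    then show "x = y"
      using inj pt by (cases x; cases y) (auto simp: h_def inj_eq)
  qed
  moreover have "range h = N"
    unfolding N h_def by (force split: option.splits)
  ultimately have "lmod_iso L_car None L_t N pt \<sigma> h"
    using step \<open>\<sigma> pt = pt\<close>
    by (auto simp: lmod_iso_def bij_betw_def L_car_def L_t_def h_def split: option.splits)
  then have "lmod_iso N pt \<sigma> L_car None L_t (inv_into L_car h)"
    by (rule lmod_iso_inv) (simp_all add: L_car_def)
  then show ?thesis
    by blast
qed

lemma lmod_iso_C_enum:
  fixes E :: "int \<Rightarrow> 'b"
  assumes k: "1 \<le> k" and eq: "\<And>e e'. E e = E e' \<longleftrightarrow> int k dvd e - e'"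
    and pt: "pt \<notin> range E" and N: "N = insert pt (range E)"
    and step: "\<And>e. \<sigma> (E e) = E (e + 1)" and "\<sigma> pt = pt"
  shows "\<exists>\<alpha>. lmod_iso N pt \<sigma> (C_car k) None (C_t k) \<alpha>"
proof -
  define h where "h = case_option pt E"
  have E_mod: "E (e mod int k) = E e" for e
    using eq by (simp add: mod_eq_dvd_iff[symmetric])
  have "inj_on h (C_car k)"
  proof (rule inj_onI)
    fix x y assume xy: "x \<in> C_car k" "y \<in> C_car k" and "h x = h y"
    show "x = y"
    proof (cases x; cases y)
      fix a b assume ab: "x = Some a" "y = Some b"
      then have "a mod int k = b mod int k"
        using \<open>h x = h y\<close> eq by (simp add: h_def mod_eq_dvd_iff)
      moreover have "a mod int k = a" and "b mod int k = b"
        using xy ab by (auto simp: C_car_def)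
      ultimately show "x = y"
        using ab by simp
    qed (use \<open>h x = h y\<close> pt in \<open>auto simp: h_def\<close>)
  qed
  moreover have "h ` C_car k = N"
  proof
    show "h ` C_car k \<subseteq> N"
      unfolding N h_def by (auto split: option.splits)
    have "E e \<in> h ` C_car k" for e
    proof
      show "E e = h (Some (e mod int k))"
        using E_mod by (simp add: h_def)
      show "Some (e mod int k) \<in> C_car k"
        using k by (simp add: C_car_def)
    qed
    moreover have "pt \<in> h ` C_car k"
      by (force simp: h_def C_car_def)
    ultimately show "N \<subseteq> h ` C_car k"
      unfolding N by blast
  qed
  moreover have "h (C_t k x) = \<sigma> (h x)" for x
    using step \<open>\<sigma> pt = pt\<close> E_mod by (cases x) (simp_all add: C_t_def h_def)
  ultimately have "lmod_iso (C_car k) None (C_t k) N pt \<sigma> h"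
    by (simp add: lmod_iso_def bij_betw_def h_def)
  then have "lmod_iso N pt \<sigma> (C_car k) None (C_t k) (inv_into (C_car k) h)"
    by (rule lmod_iso_inv) (use k in \<open>auto simp: C_car_def C_t_def\<close>)
  then show ?thesis
    by blast
qed

lemma L_automorphism:
  assumes "lmod_iso L_car None L_t L_car None L_t \<gamma>"
  shows "\<exists>n. \<forall>x. \<gamma> x = phiL n x"
proof -
  have bij: "bij \<gamma>" and \<gamma>0: "\<gamma> None = None" and comm: "\<And>x. \<gamma> (L_t x) = L_t (\<gamma> x)"
    using assms by (auto simp: lmod_iso_def L_car_def)
  have "\<gamma> (Some 0) \<noteq> \<gamma> None"
    using bij by (simp add: bij_def inj_eq)
  then have "\<gamma> (Some 0) \<noteq> None"
    using \<gamma>0 by simp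
  then obtain n where n: "\<gamma> (Some 0) = Some n"
    by auto
  have up: "\<gamma> (Some (j + 1)) = map_option (\<lambda>i. i + 1) (\<gamma> (Some j))" for j
    using comm[of "Some j"] by (simp add: L_t_def)
  have "\<gamma> (Some (int m)) = Some (int m + n) \<and> \<gamma> (Some (- int m)) = Some (- int m + n)" for m
  proof (induction m)
    case 0
    show ?case using n by simp
  next
    case (Suc m)
    have "\<gamma> (Some (int (Suc m))) = Some (int (Suc m) + n)"
      using up[of "int m"] Suc by (simp add: algebra_simps)
    moreover have "map_option (\<lambda>i. i + 1) (\<gamma> (Some (- int (Suc m)))) = Some (- int m + n)"
      using up[of "- int (Suc m)"] Suc by simp
    then have "\<gamma> (Some (- int (Suc m))) = Some (- int (Suc m) + n)"
      by auto
    ultimately show ?case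
      by simp
  qed
  note nat_cases = this
  have "\<gamma> (Some j) = Some (j + n)" for j
  proof (cases "0 \<le> j")
    case True
    then show ?thesis
      using nat_cases[of "nat j"] by simp
  next
    case False
    then show ?thesis
      using nat_cases[of "nat (- j)"] by simp
  qed
  then have "\<gamma> x = phiL n x" for x
    using \<gamma>0 by (cases x) (simp_all add: phiL_def)
  then show ?thesis
    by blast
qed

lemma C_automorphism:
  assumes "lmod_iso (C_car k) None (C_t k) (C_car k) None (C_t k) \<gamma>" and k: "1 \<le> k"
  shows "\<exists>m. \<forall>x\<in>C_car k. \<gamma> x = psiC k m x"
proof -
  have bij: "bij_betw \<gamma> (C_car k) (C_car k)" and \<gamma>0: "\<gamma> None = None"
    and comm: "\<And>x. x \<in> C_car k \<Longrightarrow> \<gamma> (C_t k x) = C_t k (\<gamma> x)"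
    using assms by (auto simp: lmod_iso_def)
  have in_C: "Some 0 \<in> C_car k" "None \<in> C_car k"
    using k by (simp_all add: C_car_def)
  then have "\<gamma> (Some 0) \<noteq> \<gamma> None" and "\<gamma> (Some 0) \<in> C_car k"
    using inj_on_eq_iff[OF bij_betw_imp_inj_on[OF bij]] bij_betw_apply[OF bij] by simp_all
  then have "\<gamma> (Some 0) \<noteq> None" and "\<gamma> (Some 0) \<in> C_car k"
    using \<gamma>0 by simp_all
  then obtain m where m: "\<gamma> (Some 0) = Some m" and "0 \<le> m" "m < int k"
    by (auto simp: C_car_def)
  have "\<gamma> (Some (int j)) = Some ((int j + m) mod int k)" if "j < k" for j
    using that
  proof (induction j)
    case 0
    show ?case using m \<open>0 \<le> m\<close> \<open>m < int k\<close> by simp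
  next
    case (Suc j)
    have "Some (int j) \<in> C_car k" and "C_t k (Some (int j)) = Some (int (Suc j))"
      using Suc.prems by (simp_all add: C_car_def C_t_def)
    then have "\<gamma> (Some (int (Suc j))) = C_t k (\<gamma> (Some (int j)))"
      using comm by metis
    also have "\<dots> = Some (((int j + m) mod int k + 1) mod int k)"
      using Suc by (simp add: C_t_def)
    also have "\<dots> = Some ((int j + m + 1) mod int k)"
      by (simp only: mod_add_left_eq)
    also have "\<dots> = Some ((int (Suc j) + m) mod int k)"
      by (simp add: algebra_simps)
    finally show ?case .
  qed
  note on_C = this
  have "\<gamma> x = psiC k m x" if x: "x \<in> C_car k" for x
  proof (cases x)
    case (Some j)
    then have "0 \<le> j" and "nat j < k"
      using x by (auto simp: C_car_def)
    then show ?thesis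
      using on_C[of "nat j"] Some by (simp add: psiC_def add.commute)
  qed (simp add: \<gamma>0 psiC_def)
  then show ?thesis
    by blast
qed

lemma lmod_iso_L_car_infinite:
  assumes "lmod_iso N q s L_car None L_t \<alpha>"
  shows "infinite N"
proof -
  have "infinite L_car"
    by (simp add: L_car_def infinite_UNIV_char_0 finite_option_UNIV)
  moreover have "bij_betw \<alpha> N L_car"
    using assms by (simp add: lmod_iso_def)
  ultimately show ?thesis
    using bij_betw_finite by blast
qed

lemma lmod_iso_C_car_card:
  assumes "lmod_iso N q s (C_car k) None (C_t k) \<alpha>"
  shows "finite N" and "card N = Suc k"
proof -
  have bij: "bij_betw \<alpha> N (C_car k)"
    using assms by (simp add: lmod_iso_def)
  have "finite (C_car k)" and "card (C_car k) = Suc k"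
    by (simp_all add: C_car_def card_image)
  then show "finite N" and "card N = Suc k"
    using bij_betw_finite[OF bij] bij_betw_same_card[OF bij] by simp_all
qed

section \<open>Indecomposable torsion-free modules\<close>

context tf_orbit
begin

lemma c_nonzero: "c \<in> M - {pt}"
  using c by simp

lemma absorbed_by_orbit:
  assumes ind: "mod_indecomp M pt f" and reach: "\<And>n. \<exists>m. (f ^^ (m + n)) c \<in> Q"
  shows "absorbed f (M - {pt} - Q) Q"
proof
  show "f x \<in> (M - {pt} - Q) \<union> Q" if "x \<in> M - {pt} - Q" for x
    using torsion_free_step[OF mod tf] that by auto
  show "\<exists>n. (f ^^ n) x \<in> Q" if x: "x \<in> M - {pt} - Q" for x
  proof -
    have "x \<in> M - {pt}"
      using x by blast
    then obtain a b where "(f ^^ a) x = (f ^^ b) c"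
      using mod_indecomp_orbits_meet[OF mod ind _ c_nonzero] by blast
    moreover obtain m where "(f ^^ (m + b)) c \<in> Q"
      using reach by blast
    ultimately have "(f ^^ (m + a)) x \<in> Q"
      by (simp add: funpow_apply_add[symmetric])
    then show ?thesis ..
  qed
qed auto

lemma loc_iso_L:
  assumes ind: "mod_indecomp M pt f" and "k = 0"
  shows "\<exists>\<alpha>. lmod_iso (loc M f) (loc_pt M f pt) (loc_fwd M f) L_car None L_t \<alpha>"
    and "\<exists>\<alpha>. lmod_iso (loc M f) (loc_pt M f pt) (loc_bwd M f) L_car None L_t \<alpha>"
proof -
  have inj: "inj orbit_cls" and inj': "inj (\<lambda>e. orbit_cls (- e))"
    using orbit_cls_eq_iff \<open>k = 0\<close> by (auto simp: inj_def)
  have pt: "loc_pt M f pt \<notin> range orbit_cls" and pt': "loc_pt M f pt \<notin> range (\<lambda>e. orbit_cls (- e))"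
    using orbit_cls_ne_loc_pt by (metis rangeE)+
  show "\<exists>\<alpha>. lmod_iso (loc M f) (loc_pt M f pt) (loc_fwd M f) L_car None L_t \<alpha>"
    by (rule lmod_iso_L_enum[OF inj pt loc_eq_orbit[OF ind] loc_fwd_orbit_cls loc_fwd_loc_pt[OF mod]])
  show "\<exists>\<alpha>. lmod_iso (loc M f) (loc_pt M f pt) (loc_bwd M f) L_car None L_t \<alpha>"
  proof (rule lmod_iso_L_enum[where E = "\<lambda>e. orbit_cls (- e)"])
    show "inj (\<lambda>e. orbit_cls (- e))" "loc_pt M f pt \<notin> range (\<lambda>e. orbit_cls (- e))"
      "loc_bwd M f (loc_pt M f pt) = loc_pt M f pt"
      using inj' pt' loc_bwd_loc_pt[OF mod] by simp_all
    show "loc M f = insert (loc_pt M f pt) (range (\<lambda>e. orbit_cls (- e)))"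
      using loc_eq_orbit[OF ind] range_orbit_cls_uminus by simp
    show "loc_bwd M f (orbit_cls (- e)) = orbit_cls (- (e + 1))" for e
      using loc_bwd_orbit_cls[of "- e"] by simp
  qed
qed

lemma loc_iso_C:
  assumes ind: "mod_indecomp M pt f" and k: "1 \<le> k"
  shows "\<exists>\<alpha>. lmod_iso (loc M f) (loc_pt M f pt) (loc_fwd M f) (C_car k) None (C_t k) \<alpha>"
    and "\<exists>\<alpha>. lmod_iso (loc M f) (loc_pt M f pt) (loc_bwd M f) (C_car k) None (C_t k) \<alpha>"
proof -
  have pt: "loc_pt M f pt \<notin> range orbit_cls" and pt': "loc_pt M f pt \<notin> range (\<lambda>e. orbit_cls (- e))"
    using orbit_cls_ne_loc_pt by (metis rangeE)+
  show "\<exists>\<alpha>. lmod_iso (loc M f) (loc_pt M f pt) (loc_fwd M f) (C_car k) None (C_t k) \<alpha>"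
    by (rule lmod_iso_C_enum[OF k orbit_cls_eq_iff pt loc_eq_orbit[OF ind] loc_fwd_orbit_cls
          loc_fwd_loc_pt[OF mod]])
  show "\<exists>\<alpha>. lmod_iso (loc M f) (loc_pt M f pt) (loc_bwd M f) (C_car k) None (C_t k) \<alpha>"
  proof (rule lmod_iso_C_enum[where E = "\<lambda>e. orbit_cls (- e)"])
    show "1 \<le> k" "loc_pt M f pt \<notin> range (\<lambda>e. orbit_cls (- e))"
      "loc_bwd M f (loc_pt M f pt) = loc_pt M f pt"
      using k pt' loc_bwd_loc_pt[OF mod] by simp_all
    show "orbit_cls (- e) = orbit_cls (- e') \<longleftrightarrow> int k dvd e - e'" for e e'
      using orbit_cls_eq_iff dvd_minus_iff[of "int k" "e - e'"] by simp
    show "loc M f = insert (loc_pt M f pt) (range (\<lambda>e. orbit_cls (- e)))"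
      using loc_eq_orbit[OF ind] range_orbit_cls_uminus by simp
    show "loc_bwd M f (orbit_cls (- e)) = orbit_cls (- (e + 1))" for e
      using loc_bwd_orbit_cls[of "- e"] by simp
  qed
qed

lemma graph_type3:
  assumes ind: "mod_indecomp M pt f" and k: "1 \<le> k"
  shows "graph_type3 M pt f"
proof -
  define C where "C = (\<lambda>i. (f ^^ i) c) ` {..<k}"
  define D where "D = M - {pt} - C"
  have cycle: "(f ^^ k) c = c"
    using orbit_eq_iff[of k 0] by simp
  have inj: "inj_on (\<lambda>i. (f ^^ i) c) {..<k}"
    using orbit_eq_iff by (auto simp: inj_on_def)
  have C_sub: "C \<subseteq> M - {pt}"
    using orbit_in by (auto simp: C_def)
  have "absorbed f D C"
    unfolding D_def
  proof (rule absorbed_by_orbit[OF ind])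
    fix n
    have "(f ^^ n) c = (f ^^ (n mod k)) c" and "n mod k < k"
      using orbit_eq_iff[of n "n mod k"] k by simp_all
    then show "\<exists>m. (f ^^ (m + n)) c \<in> C"
      by (intro exI[of _ 0]) (auto simp: C_def)
  qed
  then interpret absorbed f D C .
  define P where "P = (\<lambda>x. {y \<in> D. exit_point y = exit_point x}) ` D"
  have "\<forall>T\<in>P. \<exists>r. rooted_tree f T r \<and> f r \<in> C"
    using rooted_tree_exit_class exit_point(2) by (auto simp: P_def)
  moreover have "pairwise disjnt P"
    by (auto simp: P_def pairwise_def disjnt_def)
  moreover have "{} \<notin> P"
    by (auto simp: P_def)
  moreover have "\<Union> P = D"
    by (auto simp: P_def)
  ultimately show ?thesis
    unfolding graph_type3_def Let_def using k cycle inj C_sub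
    by (intro exI[of _ c] exI[of _ k] exI[of _ P]) (simp add: C_def D_def)
qed

definition tail :: "nat \<Rightarrow> 'a set" where
  "tail N = range (\<lambda>i. (f ^^ (Suc N + i)) c)"

lemma tail_sub: "tail N \<subseteq> M - {pt}"
  unfolding tail_def using orbit_in by blast

lemma funpow_in_tail_iff:
  assumes "k = 0"
  shows "(f ^^ n) c \<in> tail N \<longleftrightarrow> N < n"
proof
  assume "(f ^^ n) c \<in> tail N"
  then obtain i where "(f ^^ n) c = (f ^^ (Suc N + i)) c"
    by (auto simp: tail_def)
  then show "N < n"
    using orbit_eq_iff[of n "Suc N + i"] \<open>k = 0\<close> by simp
next
  assume "N < n"
  then have "n = Suc N + (n - Suc N)"
    by simp
  then show "(f ^^ n) c \<in> tail N"
    unfolding tail_def by (metis rangeI)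
qed

lemma finite_off_tail0:
  assumes ind: "mod_indecomp M pt f" and "k = 0" and fg: "fin_gen M pt f"
  shows "finite (M - {pt} - tail 0)"
proof -
  obtain G where G: "finite G" "G \<subseteq> M" "M = insert pt {(f ^^ n) g | g n. g \<in> G}"
    using fg unfolding fin_gen_def by blast
  have "\<forall>g\<in>G - {pt}. \<exists>a b. (f ^^ a) g = (f ^^ b) c"
    using mod_indecomp_orbits_meet[OF mod ind] G(2) c by blast
  then obtain A B where AB: "\<And>g. g \<in> G - {pt} \<Longrightarrow> (f ^^ A g) g = (f ^^ B g) c"
    by metis
  have "M - {pt} - tail 0 \<subseteq> (\<Union>g\<in>G - {pt}. (\<lambda>n. (f ^^ n) g) ` {..A g})"
  proof
    fix y assume y: "y \<in> M - {pt} - tail 0"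
    then obtain g n where g: "g \<in> G" and yg: "y = (f ^^ n) g"
      using G(3) by auto
    have "g \<noteq> pt"
      using y yg mod_funpow_pt[OF mod] by auto
    have "n \<le> A g"
    proof (rule ccontr)
      assume "\<not> n \<le> A g"
      then have "y = (f ^^ (n - A g)) ((f ^^ A g) g)"
        using yg by (simp add: funpow_apply_add)
      also have "\<dots> = (f ^^ (n - A g + B g)) c"
        using AB[of g] g \<open>g \<noteq> pt\<close> by (simp add: funpow_apply_add)
      finally have "y \<in> tail 0"
        using funpow_in_tail_iff[OF \<open>k = 0\<close>] \<open>\<not> n \<le> A g\<close> by simp
      then show False
        using y by simp
    qed
    then show "y \<in> (\<Union>g\<in>G - {pt}. (\<lambda>n. (f ^^ n) g) ` {..A g})"
      using g \<open>g \<noteq> pt\<close> yg by auto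
  qed
  then show ?thesis
    by (rule finite_subset) (use G(1) in simp)
qed

lemma off_tail_subset:
  assumes "k = 0"
  shows "M - {pt} - tail N \<subseteq> (M - {pt} - tail 0) \<union> (\<lambda>i. (f ^^ i) c) ` {..N}"
proof
  fix y assume y: "y \<in> M - {pt} - tail N"
  show "y \<in> (M - {pt} - tail 0) \<union> (\<lambda>i. (f ^^ i) c) ` {..N}"
  proof (cases "y \<in> tail 0")
    case True
    then obtain i where i: "y = (f ^^ Suc i) c"
      by (auto simp: tail_def)
    then have "Suc i \<le> N"
      using y funpow_in_tail_iff[OF assms, of "Suc i" N] by auto
    then show ?thesis
      using i by (intro UnI2 image_eqI[where x = "Suc i"]) simp_all
  qed (use y in auto)
qed

lemma finite_off_tail:
  assumes "mod_indecomp M pt f" and "k = 0" and "fin_gen M pt f"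
  shows "finite (M - {pt} - tail N)"
  using off_tail_subset[OF assms(2)] by (rule finite_subset) (simp add: finite_off_tail0[OF assms])

lemma tail_entry:
  assumes ind: "mod_indecomp M pt f" and "k = 0" and fg: "fin_gen M pt f"
  shows "\<exists>N. \<forall>x \<in> M - {pt} - tail N. f x \<in> tail N \<longrightarrow> x = (f ^^ N) c"
proof -
  define D0 where "D0 = M - {pt} - tail 0"
  define J where "J = (\<lambda>i. (f ^^ Suc i) c) -` (f ` D0)"
  have "finite J"
    unfolding J_def
  proof (rule finite_vimageI)
    show "inj (\<lambda>i. (f ^^ Suc i) c)"
    proof (rule injI)
      fix i j assume "(f ^^ Suc i) c = (f ^^ Suc j) c"
      then show "i = j"
        using orbit_eq_iff[of "Suc i" "Suc j"] \<open>k = 0\<close> by simp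
    qed
  qed (simp add: D0_def finite_off_tail0[OF assms])
  define N where "N = Suc (Max (insert 0 J))"
  have J_below: "j < N" if "j \<in> J" for j
    using \<open>finite J\<close> that by (simp add: N_def le_imp_less_Suc)
  have "x = (f ^^ N) c" if x: "x \<in> M - {pt} - tail N" and fx: "f x \<in> tail N" for x
  proof -
    obtain i where i: "f x = (f ^^ Suc (N + i)) c"
      using fx by (auto simp: tail_def)
    show ?thesis
    proof (cases "x \<in> D0")
      case True
      then have "f x \<in> f ` D0"
        by simp
      then have "N + i \<in> J"
        unfolding J_def using i by simp
      then show ?thesis
        using J_below by fastforce
    next
      case False
      then obtain j where j: "x = (f ^^ Suc j) c"
        using x by (auto simp: D0_def tail_def)
      then have "Suc j \<le> N"
        using x funpow_in_tail_iff[OF \<open>k = 0\<close>, of "Suc j" N] by auto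
      moreover have "(f ^^ Suc (Suc j)) c = (f ^^ Suc (N + i)) c"
        using i j by simp
      then have "Suc j = N + i"
        using orbit_eq_iff[of "Suc (Suc j)" "Suc (N + i)"] \<open>k = 0\<close> by simp
      ultimately show ?thesis
        using j by simp
    qed
  qed
  then show ?thesis
    by blast
qed

lemma graph_type2:
  assumes ind: "mod_indecomp M pt f" and "k = 0" and fg: "fin_gen M pt f"
  shows "graph_type2 M pt f"
proof -
  obtain N where entry: "\<And>x. x \<in> M - {pt} - tail N \<Longrightarrow> f x \<in> tail N \<Longrightarrow> x = (f ^^ N) c"
    using tail_entry[OF assms] by blast
  have fin: "finite (M - {pt} - tail N)"
    by (rule finite_off_tail[OF assms])
  define D where "D = M - {pt} - tail N"
  define r where "r = (f ^^ N) c"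
  have "absorbed f D (tail N)"
    unfolding D_def
  proof (rule absorbed_by_orbit[OF ind])
    show "\<exists>m. (f ^^ (m + n)) c \<in> tail N" for n
      unfolding tail_def by (intro exI[of _ "Suc N"]) (metis rangeI)
  qed
  then interpret absorbed f D "tail N" .
  have "r \<in> D"
    using orbit_in funpow_in_tail_iff[OF \<open>k = 0\<close>] by (simp add: D_def r_def)
  have exit: "exit_point x = r" if "x \<in> D" for x
    using entry exit_point[OF that] by (simp add: D_def r_def)
  then have "{y \<in> D. exit_point y = exit_point r} = D"
    using \<open>r \<in> D\<close> by auto
  then have "rooted_tree f D r"
    using rooted_tree_exit_class[OF \<open>r \<in> D\<close>] exit[OF \<open>r \<in> D\<close>] by simp
  show ?thesis
    unfolding graph_type2_def
  proof (intro exI conjI)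
    show "finite D" "rooted_tree f D r"
      using fin \<open>rooted_tree f D r\<close> by (simp_all add: D_def)
    show "inj (\<lambda>i. (f ^^ (Suc N + i)) c)"
    proof (rule injI)
      fix i j assume "(f ^^ (Suc N + i)) c = (f ^^ (Suc N + j)) c"
      then show "i = j"
        using orbit_eq_iff[of "Suc N + i" "Suc N + j"] \<open>k = 0\<close> by simp
    qed
    show "range (\<lambda>i. (f ^^ (Suc N + i)) c) \<inter> D = {}"
      by (auto simp: D_def tail_def)
    show "M - {pt} = D \<union> range (\<lambda>i. (f ^^ (Suc N + i)) c)"
      using tail_sub[of N] by (auto simp: D_def tail_def)
    show "f r = (f ^^ (Suc N + 0)) c"
      by (simp add: r_def)
    show "\<forall>i. f ((f ^^ (Suc N + i)) c) = (f ^^ (Suc N + Suc i)) c"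
      by simp
  qed
qed

end

definition mod_periodic :: "'a set \<Rightarrow> 'a \<Rightarrow> ('a \<Rightarrow> 'a) \<Rightarrow> bool" where
  "mod_periodic M p f \<longleftrightarrow> (\<exists>x\<in>M - {p}. \<exists>q>0. (f ^^ q) x = x)"

lemma periodic_classification:
  assumes mod: "is_mod M p f" and tf: "mod_torsion_free M p f"
    and ind: "mod_indecomp M p f" and "mod_periodic M p f"
  shows "\<exists>k\<ge>1. graph_type3 M p f \<and>
      (\<exists>\<alpha>. lmod_iso (loc M f) (loc_pt M f p) (loc_fwd M f) (C_car k) None (C_t k) \<alpha>) \<and>
      (\<exists>\<alpha>. lmod_iso (loc M f) (loc_pt M f p) (loc_bwd M f) (C_car k) None (C_t k) \<alpha>)"
proof -
  obtain c q where c: "c \<in> M" "c \<noteq> p" and q: "0 < q" "(f ^^ q) c = c"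
    using \<open>mod_periodic M p f\<close> by (auto simp: mod_periodic_def)
  define k where "k = (LEAST q. 0 < q \<and> (f ^^ q) c = c)"
  interpret tf_orbit M p f c k
    using mod tf c funpow_eq_iff_mod_least_period[OF q] by unfold_locales (simp_all add: k_def)
  have "1 \<le> k"
    using funpow_eq_iff_mod_least_period(1)[OF q] by (simp add: k_def)
  then show ?thesis
    using graph_type3[OF ind] loc_iso_C[OF ind] by blast
qed

lemma aperiodic_classification:
  assumes mod: "is_mod M p f" and tf: "mod_torsion_free M p f"
    and ind: "mod_indecomp M p f" and fg: "fin_gen M p f" and "\<not> mod_periodic M p f"
  shows "graph_type2 M p f \<and>
      (\<exists>\<alpha>. lmod_iso (loc M f) (loc_pt M f p) (loc_fwd M f) L_car None L_t \<alpha>) \<and>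
      (\<exists>\<alpha>. lmod_iso (loc M f) (loc_pt M f p) (loc_bwd M f) L_car None L_t \<alpha>)"
proof -
  obtain c where c: "c \<in> M" "c \<noteq> p"
    using ind mod by (auto simp: mod_indecomp_def is_mod_def)
  have "(f ^^ q) x \<noteq> x" if "x \<in> M - {p}" and "0 < q" for x q
    using \<open>\<not> mod_periodic M p f\<close> that unfolding mod_periodic_def by blast
  then interpret tf_orbit M p f c 0
    using mod tf c funpow_eq_iff_aperiodic[OF mod tf _ c] by unfold_locales auto
  show ?thesis
    using graph_type2[OF ind _ fg] loc_iso_L[OF ind] by blast
qed

lemma mod_periodic_iff_finite_loc:
  assumes "is_mod M p f" and "mod_torsion_free M p f"
    and "mod_indecomp M p f" and "fin_gen M p f"
  shows "mod_periodic M p f \<longleftrightarrow> finite (loc M f)"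
proof
  assume "mod_periodic M p f"
  then obtain k \<alpha> where "lmod_iso (loc M f) (loc_pt M f p) (loc_fwd M f) (C_car k) None (C_t k) \<alpha>"
    using periodic_classification[OF assms(1-3)] by blast
  then show "finite (loc M f)"
    by (rule lmod_iso_C_car_card(1))
next
  assume "finite (loc M f)"
  show "mod_periodic M p f"
  proof (rule ccontr)
    assume "\<not> mod_periodic M p f"
    then obtain \<alpha> where "lmod_iso (loc M f) (loc_pt M f p) (loc_fwd M f) L_car None L_t \<alpha>"
      using aperiodic_classification[OF assms] by blast
    then have "infinite (loc M f)"
      by (rule lmod_iso_L_car_infinite)
    then show False
      using \<open>finite (loc M f)\<close> by contradiction
  qed
qed

lemma lmod_iso_gluing_L:
  assumes \<alpha>: "lmod_iso N1 q1 s1 L_car None L_t \<alpha>" and \<beta>: "lmod_iso N2 q2 s2 L_car None L_t \<beta>"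
    and \<phi>: "lmod_iso N1 q1 s1 N2 q2 s2 \<phi>" and "q1 \<in> N1" and "\<And>x. x \<in> N1 \<Longrightarrow> s1 x \<in> N1"
  shows "\<exists>n. \<forall>x\<in>N1. \<beta> (\<phi> x) = phiL n (\<alpha> x)"
proof -
  have "lmod_iso L_car None L_t N1 q1 s1 (inv_into N1 \<alpha>)"
    using \<alpha> assms(4,5) by (rule lmod_iso_inv)
  then have "lmod_iso L_car None L_t L_car None L_t (\<beta> \<circ> (\<phi> \<circ> inv_into N1 \<alpha>))"
    using \<phi> \<beta> by (blast intro: lmod_iso_comp)
  then obtain n where n: "\<And>y. \<beta> (\<phi> (inv_into N1 \<alpha> y)) = phiL n y"
    using L_automorphism by fastforce
  have "inj_on \<alpha> N1"
    using \<alpha> by (simp add: lmod_iso_def bij_betw_def)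
  then have "\<beta> (\<phi> x) = phiL n (\<alpha> x)" if "x \<in> N1" for x
    using n[of "\<alpha> x"] that by simp
  then show ?thesis
    by blast
qed

lemma lmod_iso_gluing_C:
  assumes \<alpha>: "lmod_iso N1 q1 s1 (C_car k) None (C_t k) \<alpha>"
    and \<beta>: "lmod_iso N2 q2 s2 (C_car k) None (C_t k) \<beta>"
    and \<phi>: "lmod_iso N1 q1 s1 N2 q2 s2 \<phi>" and "q1 \<in> N1" and "\<And>x. x \<in> N1 \<Longrightarrow> s1 x \<in> N1"
    and k: "1 \<le> k"
  shows "\<exists>m. \<forall>x\<in>N1. \<beta> (\<phi> x) = psiC k m (\<alpha> x)"
proof -
  have "lmod_iso (C_car k) None (C_t k) N1 q1 s1 (inv_into N1 \<alpha>)"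
    using \<alpha> assms(4,5) by (rule lmod_iso_inv)
  then have "lmod_iso (C_car k) None (C_t k) (C_car k) None (C_t k) (\<beta> \<circ> (\<phi> \<circ> inv_into N1 \<alpha>))"
    using \<phi> \<beta> by (blast intro: lmod_iso_comp)
  then obtain m where m: "\<And>y. y \<in> C_car k \<Longrightarrow> \<beta> (\<phi> (inv_into N1 \<alpha> y)) = psiC k m y"
    using C_automorphism[OF _ k] by fastforce
  have "bij_betw \<alpha> N1 (C_car k)"
    using \<alpha> by (simp add: lmod_iso_def)
  then have "\<beta> (\<phi> x) = psiC k m (\<alpha> x)" if "x \<in> N1" for x
    using m[of "\<alpha> x"] that by (simp add: bij_betw_apply bij_betw_imp_inj_on)
  then show ?thesis
    by blast
qed

lemma torsion_free_triple_classification: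
  assumes coh: "coherent_triple M1 p1 f1 M2 p2 f2 phi"
    and tf1: "mod_torsion_free M1 p1 f1" and tf2: "mod_torsion_free M2 p2 f2"
    and ind1: "mod_indecomp M1 p1 f1" and ind2: "mod_indecomp M2 p2 f2"
  shows "(graph_type2 M1 p1 f1 \<and> graph_type2 M2 p2 f2 \<and>
        (\<exists>\<alpha> \<beta> (n::int).
           lmod_iso (loc M1 f1) (loc_pt M1 f1 p1) (loc_fwd M1 f1) L_car None L_t \<alpha> \<and>
           lmod_iso (loc M2 f2) (loc_pt M2 f2 p2) (loc_bwd M2 f2) L_car None L_t \<beta> \<and>
           (\<forall>x\<in>loc M1 f1. \<beta> (phi x) = phiL n (\<alpha> x))))
     \<or> (graph_type3 M1 p1 f1 \<and> graph_type3 M2 p2 f2 \<and>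
        (\<exists>(k::nat) \<alpha> \<beta> (m::int). k \<ge> 1 \<and>
           lmod_iso (loc M1 f1) (loc_pt M1 f1 p1) (loc_fwd M1 f1) (C_car k) None (C_t k) \<alpha> \<and>
           lmod_iso (loc M2 f2) (loc_pt M2 f2 p2) (loc_bwd M2 f2) (C_car k) None (C_t k) \<beta> \<and>
           (\<forall>x\<in>loc M1 f1. \<beta> (phi x) = psiC k m (\<alpha> x))))"
proof -
  note mods = coherent_triple_mods[OF coh]
  note bij = coherent_triple_bij[OF coh]
  note glue_hyps = coherent_triple_iso[OF coh] loc_pt_in_loc[OF mods(1)] loc_fwd_in_loc[OF mods(1)]
  have fg: "fin_gen M1 p1 f1" "fin_gen M2 p2 f2"
    using coh by (simp_all add: coherent_triple_def)
  have "mod_periodic M1 p1 f1 \<longleftrightarrow> mod_periodic M2 p2 f2"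
    using mod_periodic_iff_finite_loc[OF mods(1) tf1 ind1 fg(1)]
      mod_periodic_iff_finite_loc[OF mods(2) tf2 ind2 fg(2)] bij_betw_finite[OF bij] by simp
  then consider "mod_periodic M1 p1 f1" "mod_periodic M2 p2 f2"
    | "\<not> mod_periodic M1 p1 f1" "\<not> mod_periodic M2 p2 f2"
    by blast
  then show ?thesis
  proof cases
    case 1
    obtain k \<alpha> where k: "1 \<le> k" and "graph_type3 M1 p1 f1"
      and \<alpha>: "lmod_iso (loc M1 f1) (loc_pt M1 f1 p1) (loc_fwd M1 f1) (C_car k) None (C_t k) \<alpha>"
      using periodic_classification[OF mods(1) tf1 ind1 1(1)] by blast
    moreover obtain k' \<beta> where "graph_type3 M2 p2 f2"
      and \<beta>: "lmod_iso (loc M2 f2) (loc_pt M2 f2 p2) (loc_bwd M2 f2) (C_car k') None (C_t k') \<beta>"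
      using periodic_classification[OF mods(2) tf2 ind2 1(2)] by blast
    moreover have "k' = k"
      using lmod_iso_C_car_card(2)[OF \<alpha>] lmod_iso_C_car_card(2)[OF \<beta>] bij_betw_same_card[OF bij]
      by simp
    ultimately show ?thesis
      using lmod_iso_gluing_C[OF \<alpha> _ glue_hyps k] by blast
  next
    case 2
    obtain \<alpha> where "graph_type2 M1 p1 f1"
      and \<alpha>: "lmod_iso (loc M1 f1) (loc_pt M1 f1 p1) (loc_fwd M1 f1) L_car None L_t \<alpha>"
      using aperiodic_classification[OF mods(1) tf1 ind1 fg(1) 2(1)] by blast
    moreover obtain \<beta> where "graph_type2 M2 p2 f2"
      and \<beta>: "lmod_iso (loc M2 f2) (loc_pt M2 f2 p2) (loc_bwd M2 f2) L_car None L_t \<beta>"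
      using aperiodic_classification[OF mods(2) tf2 ind2 fg(2) 2(2)] by blast
    ultimately show ?thesis
      using lmod_iso_gluing_L[OF \<alpha> \<beta> glue_hyps] by blast
  qed
qed

theorem mainTheorem12:
  fixes M1 M2 :: "'a set" and p1 p2 :: 'a and f1 f2 :: "'a \<Rightarrow> 'a"
    and phi :: "('a \<times> nat) set \<Rightarrow> ('a \<times> nat) set"
  assumes "coherent_triple M1 p1 f1 M2 p2 f2 phi"
    and "triple_indecomp M1 p1 f1 M2 p2 f2 phi"
  shows "(mod_indecomp M1 p1 f1 \<or> M1 = {p1}) \<and> (mod_indecomp M2 p2 f2 \<or> M2 = {p2}) \<and>
    ((M2 = {p2} \<and> graph_type1 M1 p1 f1 \<and> triple_torsion M1 p1 f1 M2 p2 f2)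
     \<or> (M1 = {p1} \<and> graph_type1 M2 p2 f2 \<and> triple_torsion M1 p1 f1 M2 p2 f2)
     \<or> (graph_type2 M1 p1 f1 \<and> graph_type2 M2 p2 f2 \<and>
        (\<exists>\<alpha> \<beta> (n::int).
           lmod_iso (loc M1 f1) (loc_pt M1 f1 p1) (loc_fwd M1 f1) L_car None L_t \<alpha> \<and>
           lmod_iso (loc M2 f2) (loc_pt M2 f2 p2) (loc_bwd M2 f2) L_car None L_t \<beta> \<and>
           (\<forall>x\<in>loc M1 f1. \<beta> (phi x) = phiL n (\<alpha> x))) \<and>
        triple_torsion_free M1 p1 f1 M2 p2 f2)
     \<or> (graph_type3 M1 p1 f1 \<and> graph_type3 M2 p2 f2 \<and>
        (\<exists>(k::nat) \<alpha> \<beta> (m::int). k \<ge> 1 \<and>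
           lmod_iso (loc M1 f1) (loc_pt M1 f1 p1) (loc_fwd M1 f1) (C_car k) None (C_t k) \<alpha> \<and>
           lmod_iso (loc M2 f2) (loc_pt M2 f2 p2) (loc_bwd M2 f2) (C_car k) None (C_t k) \<beta> \<and>
           (\<forall>x\<in>loc M1 f1. \<beta> (phi x) = psiC k m (\<alpha> x))) \<and>
        triple_torsion_free M1 p1 f1 M2 p2 f2))"
proof -
  note mods = coherent_triple_mods[OF assms(1)]
  have "\<not> triple_decomposable M1 p1 f1 M2 p2 f2 phi"
    using assms(2) by (simp add: triple_indecomp_def)
  from triple_torsion_or_torsion_free[OF assms(1) this] show ?thesis
  proof (elim disjE conjE)
    assume tor1: "mod_torsion M1 p1 f1" and tor2: "mod_torsion M2 p2 f2"
    have "triple_torsion M1 p1 f1 M2 p2 f2"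
      using tor1 tor2 lmod_torsion_loc[OF mods(1) tor1] lmod_torsion_loc[OF mods(2) tor2]
      by (simp add: triple_torsion_def)
    then show ?thesis
      using torsion_triple_indecomp_cases[OF assms tor1]
        torsion_indecomp_graph_type1[OF mods(1) tor1] torsion_indecomp_graph_type1[OF mods(2) tor2]
      by blast
  next
    assume tf1: "mod_torsion_free M1 p1 f1" and tf2: "mod_torsion_free M2 p2 f2"
    note ind = torsion_free_triple_indecomp[OF assms tf1 tf2]
    have "triple_torsion_free M1 p1 f1 M2 p2 f2"
      using tf1 tf2 lmod_torsion_free_loc(1)[OF mods(1) tf1] lmod_torsion_free_loc(2)[OF mods(2) tf2]
      by (simp add: triple_torsion_free_def)
    then show ?thesis
      using ind torsion_free_triple_classification[OF assms(1) tf1 tf2 ind] by blast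
  qed
qed

end
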